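(* Let $R=k[x_1,\dots,x_n]$ be a polynomial ring over a field $k$, and let $I$ be a monomial ideal of $R$ such that for every $F\in\mathcal F(I)$ the primary component $I_F$ is generated by monomials of one and the same degree $d_F$. Then $I^{(t)}$ is integrally closed for all $t\gg 0$ if and only if for every $F\in\mathcal F(I)$ the ideal $I_F$ contains the monomials $x_i^{d_F-1}x_j$ for all $i,j\notin F$.
   Context: For $F\subseteq[n]=\{1,\dots,n\}$, $P_F$ is the ideal generated by the variables $x_i$ with $i\notin F$. $\mathcal F(I)$ is the set of all $F\subseteq[n]$ such that $P_F$ is a minimal prime of $I$, and for $F\in\mathcal F(I)$, $I_F$ denotes the primary component of $I$ associated with $P_F$. The $t$-th symbolic power $I^{(t)}$ is the intersection of the primary components of $I^t$ associated with the minimal primes of $I$. *)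

theory Defs
  imports Main "HOL-Library.Poly_Mapping"
begin

definition is_ideal :: "'a::comm_ring_1 set \<Rightarrow> bool" where
  "is_ideal I \<longleftrightarrow> 0 \<in> I \<and> (\<forall>a\<in>I. \<forall>b\<in>I. a + b \<in> I) \<and> (\<forall>r. \<forall>a\<in>I. r * a \<in> I)"

definition ideal_gen :: "'a::comm_ring_1 set \<Rightarrow> 'a set" where
  "ideal_gen S = \<Inter>{J. is_ideal J \<and> S \<subseteq> J}"

definition ideal_prod :: "'a::comm_ring_1 set \<Rightarrow> 'a set \<Rightarrow> 'a set" where
  "ideal_prod I J = ideal_gen {a * b | a b. a \<in> I \<and> b \<in> J}"

fun ideal_pow :: "'a::comm_ring_1 set \<Rightarrow> nat \<Rightarrow> 'a set" where
  "ideal_pow I 0 = UNIV"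
| "ideal_pow I (Suc t) = ideal_prod I (ideal_pow I t)"

definition prime_ideal :: "'a::comm_ring_1 set \<Rightarrow> bool" where
  "prime_ideal P \<longleftrightarrow> is_ideal P \<and> P \<noteq> UNIV \<and> (\<forall>a b. a * b \<in> P \<longrightarrow> a \<in> P \<or> b \<in> P)"

definition primary_ideal :: "'a::comm_ring_1 set \<Rightarrow> bool" where
  "primary_ideal Q \<longleftrightarrow> is_ideal Q \<and> Q \<noteq> UNIV \<and>
     (\<forall>a b. a * b \<in> Q \<longrightarrow> a \<in> Q \<or> (\<exists>m. b ^ m \<in> Q))"

definition ideal_radical :: "'a::comm_ring_1 set \<Rightarrow> 'a set" where
  "ideal_radical I = {a. \<exists>m. a ^ m \<in> I}"

definition minimal_prime :: "'a::comm_ring_1 set \<Rightarrow> 'a set \<Rightarrow> bool" where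
  "minimal_prime P I \<longleftrightarrow> prime_ideal P \<and> I \<subseteq> P \<and>
     (\<forall>P'. prime_ideal P' \<and> I \<subseteq> P' \<and> P' \<subseteq> P \<longrightarrow> P' = P)"

definition minimal_primary_decomposition :: "'a::comm_ring_1 set \<Rightarrow> 'a set set \<Rightarrow> bool" where
  "minimal_primary_decomposition I Qs \<longleftrightarrow> finite Qs \<and> (\<forall>Q\<in>Qs. primary_ideal Q) \<and>
     \<Inter>Qs = I \<and>
     (\<forall>Q\<in>Qs. \<forall>Q'\<in>Qs. ideal_radical Q = ideal_radical Q' \<longrightarrow> Q = Q') \<and>
     (\<forall>Q\<in>Qs. \<Inter>(Qs - {Q}) \<noteq> I)"

definition primary_component :: "'a::comm_ring_1 set \<Rightarrow> 'a set \<Rightarrow> 'a set" where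
  "primary_component I P = (THE Q. \<exists>Qs. minimal_primary_decomposition I Qs \<and> Q \<in> Qs \<and>
      ideal_radical Q = P)"

definition integral_over_ideal :: "'a::comm_ring_1 set \<Rightarrow> 'a \<Rightarrow> bool" where
  "integral_over_ideal I f \<longleftrightarrow> (\<exists>m\<ge>1. \<exists>c. (\<forall>i\<in>{1..m}. c i \<in> ideal_pow I i) \<and>
      f ^ m + (\<Sum>i=1..m. c i * f ^ (m - i)) = 0)"

definition integral_closure :: "'a::comm_ring_1 set \<Rightarrow> 'a set" where
  "integral_closure I = {f. integral_over_ideal I f}"

definition integrally_closed :: "'a::comm_ring_1 set \<Rightarrow> bool" where
  "integrally_closed I \<longleftrightarrow> integral_closure I = I"

definition symbolic_power :: "'a::comm_ring_1 set \<Rightarrow> nat \<Rightarrow> 'a set" where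
  "symbolic_power I t = \<Inter>{primary_component (ideal_pow I t) P | P. minimal_prime P I}"

section \<open>The polynomial ring k[x_v : v in 'v] for a finite variable type 'v
  (so n = CARD('v) and [n] is identified with UNIV :: 'v set)\<close>

type_synonym ('v, 'k) mpoly = "('v \<Rightarrow>\<^sub>0 nat) \<Rightarrow>\<^sub>0 'k"

definition monom :: "('v \<Rightarrow>\<^sub>0 nat) \<Rightarrow> ('v, 'k::field) mpoly" where
  "monom a = Poly_Mapping.single a 1"

definition var :: "'v \<Rightarrow> ('v, 'k::field) mpoly" where
  "var i = monom (Poly_Mapping.single i 1)"

definition monom_deg :: "('v::finite \<Rightarrow>\<^sub>0 nat) \<Rightarrow> nat" where
  "monom_deg a = (\<Sum>i\<in>UNIV. Poly_Mapping.lookup a i)"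

definition monomial_ideal :: "('v, 'k::field) mpoly set \<Rightarrow> bool" where
  "monomial_ideal I \<longleftrightarrow> (\<exists>A. I = ideal_gen (monom ` A))"

definition P_ideal :: "'v set \<Rightarrow> ('v, 'k::field) mpoly set" where
  "P_ideal F = ideal_gen (var ` (- F))"

definition calF :: "('v, 'k::field) mpoly set \<Rightarrow> 'v set set" where
  "calF I = {F. minimal_prime (P_ideal F) I}"

definition I_comp :: "('v, 'k::field) mpoly set \<Rightarrow> 'v set \<Rightarrow> ('v, 'k) mpoly set" where
  "I_comp I F = primary_component I (P_ideal F)"

end

theory Submission
  imports Defs "HOL-Library.Set_Algebras" "HOL-Library.Countable"
begin

text \<open>A monomial ideal is determined by its upward closed set of exponents. Its primary component at a
  minimal prime \<open>P_F\<close> is obtained by setting the variables \<open>x_i\<close>, \<open>i \<in> F\<close>, equal to \<open>1\<close>, so the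
  components of \<open>I^(t)\<close> are the powers \<open>I_F^t\<close> saturated in this way. If \<open>I_F\<close> is generated in degree
  \<open>d\<close> and contains every \<open>x_i^(d - 1) x_j\<close>, a greedy argument writes every monomial of degree \<open>d t\<close> in the
  variables outside \<open>F\<close> as a product of \<open>t\<close> of these generators once \<open>t\<close> is large. The component is then
  the ideal of all monomials of degree at least \<open>d t\<close> outside \<open>F\<close>, which is integrally closed by a
  minimal-term argument, and so is the intersection \<open>I^(t)\<close>. If some \<open>x_i^(d - 1) x_j\<close> is missing from
  \<open>I_F\<close>, a monomial with \<open>x_i^(d t - 1) x_j\<close> outside \<open>F\<close> is integral over \<open>I^(t)\<close> for every \<open>t\<close> but does
  not lie in it.\<close>

section \<open>Ideals in a commutative ring\<close>

lemma ideal_zero: "is_ideal I \<Longrightarrow> 0 \<in> I"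
  by (simp add: is_ideal_def)

lemma ideal_add: "is_ideal I \<Longrightarrow> a \<in> I \<Longrightarrow> b \<in> I \<Longrightarrow> a + b \<in> I"
  by (simp add: is_ideal_def)

lemma ideal_mult_left: "is_ideal I \<Longrightarrow> a \<in> I \<Longrightarrow> r * a \<in> I"
  by (simp add: is_ideal_def)

lemma ideal_mult_right: "is_ideal I \<Longrightarrow> a \<in> I \<Longrightarrow> a * r \<in> I"
  by (metis ideal_mult_left mult.commute)

lemma ideal_uminus: "is_ideal I \<Longrightarrow> a \<in> I \<Longrightarrow> - a \<in> I"
  by (metis ideal_mult_left mult_minus1)

lemma ideal_diff: "is_ideal I \<Longrightarrow> a \<in> I \<Longrightarrow> b \<in> I \<Longrightarrow> a - b \<in> I"
  by (metis ideal_add ideal_uminus diff_conv_add_uminus)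

lemma ideal_sum: "is_ideal I \<Longrightarrow> (\<And>x. x \<in> X \<Longrightarrow> f x \<in> I) \<Longrightarrow> sum f X \<in> I"
  by (induction X rule: infinite_finite_induct) (auto simp: ideal_zero ideal_add)

lemma ideal_power_mono:
  assumes "is_ideal I" "a ^ m \<in> I" "m \<le> n" shows "a ^ n \<in> I"
proof -
  have "a ^ n = a ^ (n - m) * a ^ m" using assms(3) by (simp add: power_add[symmetric])
  then show ?thesis using assms ideal_mult_left by metis
qed

lemma is_ideal_UNIV: "is_ideal UNIV"
  by (simp add: is_ideal_def)

lemma is_ideal_Inter: "(\<And>J. J \<in> K \<Longrightarrow> is_ideal J) \<Longrightarrow> is_ideal (\<Inter>K)"
  by (simp add: is_ideal_def)

lemma is_ideal_ideal_gen: "is_ideal (ideal_gen S)"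
  unfolding ideal_gen_def by (rule is_ideal_Inter) auto

lemma ideal_gen_superset: "S \<subseteq> ideal_gen S"
  unfolding ideal_gen_def by auto

lemma ideal_gen_least: "is_ideal J \<Longrightarrow> S \<subseteq> J \<Longrightarrow> ideal_gen S \<subseteq> J"
  unfolding ideal_gen_def by auto

lemma ideal_gen_mono: "S \<subseteq> T \<Longrightarrow> ideal_gen S \<subseteq> ideal_gen T"
  unfolding ideal_gen_def by auto

lemma is_ideal_ideal_prod: "is_ideal (ideal_prod I J)"
  unfolding ideal_prod_def by (rule is_ideal_ideal_gen)

lemma mult_mem_ideal_prod: "a \<in> I \<Longrightarrow> b \<in> J \<Longrightarrow> a * b \<in> ideal_prod I J"
  unfolding ideal_prod_def by (rule subsetD[OF ideal_gen_superset]) blast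

lemma ideal_prod_subset_left: "is_ideal I \<Longrightarrow> ideal_prod I J \<subseteq> I"
  unfolding ideal_prod_def by (rule ideal_gen_least) (use ideal_mult_right in fastforce)+

lemma ideal_prod_mono: "I \<subseteq> I' \<Longrightarrow> J \<subseteq> J' \<Longrightarrow> ideal_prod I J \<subseteq> ideal_prod I' J'"
  unfolding ideal_prod_def by (rule ideal_gen_mono) fastforce

lemma is_ideal_ideal_pow: "is_ideal (ideal_pow I t)"
  by (cases t) (simp_all add: is_ideal_UNIV is_ideal_ideal_prod)

lemma power_mem_ideal_pow: "a \<in> I \<Longrightarrow> a ^ t \<in> ideal_pow I t"
  by (induction t) (auto intro: mult_mem_ideal_prod)

lemma ideal_pow_subset: "is_ideal I \<Longrightarrow> t \<ge> 1 \<Longrightarrow> ideal_pow I t \<subseteq> I"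
  by (cases t) (auto dest: ideal_prod_subset_left)

lemma ideal_pow_mono: "I \<subseteq> J \<Longrightarrow> ideal_pow I t \<subseteq> ideal_pow J t"
  by (induction t) (simp_all add: ideal_prod_mono)

lemma integral_closure_mono: "I \<subseteq> J \<Longrightarrow> integral_closure I \<subseteq> integral_closure J"
  unfolding integral_closure_def integral_over_ideal_def
  using ideal_pow_mono by blast

lemma integral_closure_of_power:
  assumes "m \<ge> 1" and "f ^ m \<in> ideal_pow I m"
  shows "f \<in> integral_closure I"
proof -
  define c where "c k = (if k = m then - (f ^ m) else 0)" for k
  have "c k \<in> ideal_pow I k" for k
    using ideal_uminus[OF is_ideal_ideal_pow assms(2)] ideal_zero[OF is_ideal_ideal_pow]
    by (auto simp: c_def)
  moreover have "(\<Sum>k = 1..m. c k * f ^ (m - k)) = (\<Sum>k = 1..m. if k = m then - (f ^ m) else 0)"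
    by (intro sum.cong) (auto simp: c_def)
  moreover have "\<dots> = - (f ^ m)" using assms(1) by simp
  ultimately have "\<exists>c. (\<forall>i\<in>{1..m}. c i \<in> ideal_pow I i) \<and> f ^ m + (\<Sum>i = 1..m. c i * f ^ (m - i)) = 0"
    by (intro exI[of _ c]) simp
  then show ?thesis unfolding integral_closure_def integral_over_ideal_def using assms(1) by blast
qed

lemma subset_integral_closure: "I \<subseteq> integral_closure I"
  using integral_closure_of_power[of 1] mult_mem_ideal_prod[of _ I 1 UNIV] by auto

lemma integrally_closed_Inter:
  assumes "\<And>J. J \<in> K \<Longrightarrow> integrally_closed J"
  shows "integrally_closed (\<Inter>K)"
proof -
  have "integral_closure (\<Inter>K) \<subseteq> J" if "J \<in> K" for J
  proof -
    have "integral_closure (\<Inter>K) \<subseteq> integral_closure J"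
      using that by (intro integral_closure_mono) auto
    also have "\<dots> = J" using assms[OF that] unfolding integrally_closed_def by simp
    finally show ?thesis .
  qed
  moreover have "\<Inter>K \<subseteq> integral_closure (\<Inter>K)" by (rule subset_integral_closure)
  ultimately show ?thesis unfolding integrally_closed_def by blast
qed

lemma is_ideal_radical:
  assumes "is_ideal Q" shows "is_ideal (ideal_radical Q)"
  unfolding is_ideal_def ideal_radical_def
proof (intro conjI ballI allI; clarsimp?)
  show "\<exists>m. 0 ^ m \<in> Q" using assms by (intro exI[of _ 1]) (simp add: ideal_zero)
next
  fix a b m n assume am: "a ^ m \<in> Q" and bn: "b ^ n \<in> Q"
  have "(a + b) ^ (m + n) = (\<Sum>k\<le>m + n. of_nat ((m + n) choose k) * a ^ k * b ^ (m + n - k))"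
    by (simp add: binomial_ring)
  also have "\<dots> \<in> Q"
  proof (rule ideal_sum[OF assms])
    fix k assume "k \<in> {..m + n}"
    show "of_nat ((m + n) choose k) * a ^ k * b ^ (m + n - k) \<in> Q"
    proof (cases "m \<le> k")
      case True
      then have "a ^ k \<in> Q" using ideal_power_mono[OF assms am] by auto
      then show ?thesis by (metis assms ideal_mult_left ideal_mult_right mult.assoc)
    next
      case False
      then have "b ^ (m + n - k) \<in> Q" using ideal_power_mono[OF assms bn] by auto
      then show ?thesis by (metis assms ideal_mult_left)
    qed
  qed
  finally show "\<exists>m. (a + b) ^ m \<in> Q" by blast
next
  fix r a m assume "a ^ m \<in> Q"
  then have "(r * a) ^ m \<in> Q" by (simp add: power_mult_distrib assms ideal_mult_left)
  then show "\<exists>m. (r * a) ^ m \<in> Q" by blast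
qed

lemma prime_ideal_radical:
  assumes "primary_ideal Q" shows "prime_ideal (ideal_radical Q)"
proof -
  have Q: "is_ideal Q" "Q \<noteq> UNIV" and primary: "\<And>a b. a * b \<in> Q \<Longrightarrow> a \<in> Q \<or> (\<exists>m. b ^ m \<in> Q)"
    using assms unfolding primary_ideal_def by auto
  have "1 \<notin> Q" using Q by (metis UNIV_I ideal_mult_left mult.right_neutral subsetI subset_antisym)
  then have "1 \<notin> ideal_radical Q" unfolding ideal_radical_def by auto
  then have "ideal_radical Q \<noteq> UNIV" by auto
  moreover have "a \<in> ideal_radical Q \<or> b \<in> ideal_radical Q" if ab: "a * b \<in> ideal_radical Q" for a b
  proof -
    obtain m where "(a * b) ^ m \<in> Q" using ab unfolding ideal_radical_def by auto
    then have "a ^ m * b ^ m \<in> Q" by (simp add: power_mult_distrib)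
    then have "a ^ m \<in> Q \<or> (\<exists>k. (b ^ m) ^ k \<in> Q)" using primary by blast
    then show ?thesis unfolding ideal_radical_def by (auto simp: power_mult[symmetric])
  qed
  ultimately show ?thesis using is_ideal_radical[OF Q(1)] unfolding prime_ideal_def by auto
qed

lemma radical_superset: "Q \<subseteq> ideal_radical Q"
  unfolding ideal_radical_def by (auto intro: exI[of _ 1])

lemma one_not_in_prime: "prime_ideal P \<Longrightarrow> 1 \<notin> P"
  unfolding prime_ideal_def by (metis UNIV_eq_I ideal_mult_left mult.right_neutral)

lemma prod_not_in_prime:
  assumes "prime_ideal P" "finite X" "\<And>x. x \<in> X \<Longrightarrow> f x \<notin> P"
  shows "prod f X \<notin> P"
  using assms(2,3)
proof (induction X rule: finite_induct)
  case empty then show ?case using one_not_in_prime[OF assms(1)] by simp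
next
  case (insert x X) then show ?case using assms(1) unfolding prime_ideal_def by auto
qed

lemma prime_ideal_power_mem: "prime_ideal P \<Longrightarrow> a ^ m \<in> P \<Longrightarrow> a \<in> P"
  by (induction m) (auto simp: one_not_in_prime prime_ideal_def)

lemma radical_subset_prime: "prime_ideal P \<Longrightarrow> Q \<subseteq> P \<Longrightarrow> ideal_radical Q \<subseteq> P"
  unfolding ideal_radical_def using prime_ideal_power_mem by blast

lemma minimal_prime_ideal_pow_iff:
  assumes "is_ideal I" and "t \<ge> 1"
  shows "minimal_prime P (ideal_pow I t) \<longleftrightarrow> minimal_prime P I"
proof -
  have eq: "ideal_pow I t \<subseteq> Q \<longleftrightarrow> I \<subseteq> Q" if "prime_ideal Q" for Q
  proof
    assume "ideal_pow I t \<subseteq> Q"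
    then show "I \<subseteq> Q" using power_mem_ideal_pow prime_ideal_power_mem[OF that] by blast
  next
    assume "I \<subseteq> Q"
    then show "ideal_pow I t \<subseteq> Q" using ideal_pow_subset[OF assms] by blast
  qed
  show ?thesis unfolding minimal_prime_def by (simp add: eq cong: conj_cong)
qed

subsection \<open>Primary components at minimal primes\<close>

definition saturation :: "'a::comm_ring_1 set \<Rightarrow> 'a set \<Rightarrow> 'a set" where
  "saturation J P = {f. \<exists>s. s \<notin> P \<and> s * f \<in> J}"

lemma minimal_prime_eq_radical:
  assumes mp: "minimal_prime P J" and "prime_ideal (ideal_radical Q)" and "J \<subseteq> Q" and "Q \<subseteq> P"
  shows "ideal_radical Q = P"
proof -
  have P: "prime_ideal P"
    and minimal: "\<And>P'. prime_ideal P' \<Longrightarrow> J \<subseteq> P' \<Longrightarrow> P' \<subseteq> P \<Longrightarrow> P' = P"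
    using mp unfolding minimal_prime_def by auto
  have "ideal_radical Q \<subseteq> P" by (rule radical_subset_prime[OF P assms(4)])
  moreover have "J \<subseteq> ideal_radical Q" using assms(3) radical_superset by blast
  ultimately show ?thesis using minimal[OF assms(2)] by blast
qed

lemma minimal_prime_radical_of_component:
  assumes mp: "minimal_prime P J" and fin: "finite Qs" and primary: "\<forall>Q\<in>Qs. primary_ideal Q"
    and int: "\<Inter>Qs = J"
  shows "\<exists>Q\<in>Qs. ideal_radical Q = P"
proof -
  have P: "prime_ideal P" "J \<subseteq> P" using mp unfolding minimal_prime_def by auto
  have "\<exists>Q\<in>Qs. Q \<subseteq> P"
  proof (rule ccontr)
    assume "\<not> ?thesis"
    then have "\<forall>Q\<in>Qs. \<exists>q. q \<in> Q \<and> q \<notin> P" by auto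
    then obtain q where q: "\<And>Q. Q \<in> Qs \<Longrightarrow> q Q \<in> Q \<and> q Q \<notin> P" by metis
    have "prod q Qs \<in> Q" if "Q \<in> Qs" for Q
    proof -
      have "prod q Qs = q Q * prod q (Qs - {Q})" using that fin by (simp add: prod.remove)
      moreover have "is_ideal Q" using primary that unfolding primary_ideal_def by auto
      ultimately show ?thesis using q that ideal_mult_right by metis
    qed
    then have "prod q Qs \<in> P" using P(2) int by blast
    then show False using prod_not_in_prime[OF P(1) fin] q by blast
  qed
  then obtain Q where Q: "Q \<in> Qs" "Q \<subseteq> P" by blast
  have "ideal_radical Q = P"
    using minimal_prime_eq_radical[OF mp _ _ Q(2)] prime_ideal_radical primary int Q(1) by blast
  then show ?thesis using Q(1) by blast
qed

lemma saturation_subset_primary: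
  assumes "primary_ideal Q" and "ideal_radical Q = P" and "J \<subseteq> Q"
  shows "saturation J P \<subseteq> Q"
proof
  fix f assume "f \<in> saturation J P"
  then obtain s where s: "s \<notin> P" "f * s \<in> Q" using assms(3) unfolding saturation_def
    by (auto simp: mult.commute)
  have "\<not> (\<exists>m. s ^ m \<in> Q)" using s(1) assms(2) unfolding ideal_radical_def by auto
  then show "f \<in> Q" using s(2) assms(1) unfolding primary_ideal_def by blast
qed

lemma decomposition_component_eq_saturation:
  assumes mp: "minimal_prime P J" and mpd: "minimal_primary_decomposition J Qs"
    and Q: "Q \<in> Qs" "ideal_radical Q = P"
  shows "Q = saturation J P"
proof
  have fin: "finite Qs" and primary: "\<forall>Q\<in>Qs. primary_ideal Q" and int: "\<Inter>Qs = J"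
    and distinct: "\<And>Q Q'. Q \<in> Qs \<Longrightarrow> Q' \<in> Qs \<Longrightarrow> ideal_radical Q = ideal_radical Q' \<Longrightarrow> Q = Q'"
    using mpd unfolding minimal_primary_decomposition_def by auto
  have P: "prime_ideal P" using mp unfolding minimal_prime_def by auto
  have ideal: "is_ideal Q'" if "Q' \<in> Qs" for Q'
    using primary that unfolding primary_ideal_def by auto
  show "saturation J P \<subseteq> Q"
    using saturation_subset_primary primary Q int by blast
  show "Q \<subseteq> saturation J P"
  proof
    fix f assume f: "f \<in> Q"
    \<comment> \<open>by minimality of \<open>P\<close>, no other component lies in \<open>P\<close>\<close>
    have "\<exists>q. q \<in> Q' \<and> q \<notin> P" if Q': "Q' \<in> Qs - {Q}" for Q'
    proof (rule ccontr)
      assume "\<not> ?thesis"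
      then have "Q' \<subseteq> P" by auto
      moreover have "prime_ideal (ideal_radical Q')" using primary Q' prime_ideal_radical by auto
      moreover have "J \<subseteq> Q'" using int Q' by blast
      ultimately have "ideal_radical Q' = ideal_radical Q"
        using minimal_prime_eq_radical[OF mp] Q(2) by blast
      then have "Q' = Q" using distinct[OF _ Q(1)] Q' by blast
      then show False using Q' by blast
    qed
    then obtain q where q: "\<And>Q'. Q' \<in> Qs - {Q} \<Longrightarrow> q Q' \<in> Q' \<and> q Q' \<notin> P" by metis
    define s where "s = prod q (Qs - {Q})"
    have "s \<notin> P" unfolding s_def using prod_not_in_prime[OF P] fin q by auto
    moreover have "s * f \<in> Q'" if "Q' \<in> Qs" for Q'
    proof (cases "Q' = Q")
      case True then show ?thesis using f ideal[OF Q(1)] ideal_mult_left by auto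
    next
      case False
      then have "s = q Q' * prod q (Qs - {Q} - {Q'})" unfolding s_def using that fin
        by (simp add: prod.remove)
      moreover have "q Q' \<in> Q'" using q[of Q'] that False by blast
      ultimately show ?thesis using ideal[OF that] ideal_mult_right by (metis mult.assoc)
    qed
    then have "s * f \<in> J" unfolding int[symmetric] by blast
    ultimately show "f \<in> saturation J P" unfolding saturation_def by blast
  qed
qed

lemma primary_component_eq_saturation:
  assumes mp: "minimal_prime P J" and "minimal_primary_decomposition J Qs"
  shows "primary_component J P = saturation J P"
    and "primary_ideal (saturation J P)" and "ideal_radical (saturation J P) = P"
proof -
  have "finite Qs" "\<forall>Q\<in>Qs. primary_ideal Q" "\<Inter>Qs = J"
    using assms(2) unfolding minimal_primary_decomposition_def by auto
  then obtain Q where Q: "Q \<in> Qs" "ideal_radical Q = P"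
    using minimal_prime_radical_of_component[OF mp] by blast
  have "Q = saturation J P" by (rule decomposition_component_eq_saturation[OF assms Q])
  then show "primary_ideal (saturation J P)" "ideal_radical (saturation J P) = P"
    using Q \<open>\<forall>Q\<in>Qs. primary_ideal Q\<close> by auto
  show "primary_component J P = saturation J P"
    unfolding primary_component_def
  proof (rule the_equality)
    show "\<exists>Qs. minimal_primary_decomposition J Qs \<and> saturation J P \<in> Qs
        \<and> ideal_radical (saturation J P) = P"
      using assms(2) Q \<open>Q = saturation J P\<close> by auto
  next
    fix Q' assume "\<exists>Qs. minimal_primary_decomposition J Qs \<and> Q' \<in> Qs \<and> ideal_radical Q' = P"
    then show "Q' = saturation J P" using decomposition_component_eq_saturation[OF mp] by blast
  qed
qed

lemma minimal_primary_decomposition_exists: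
  assumes "finite Qs0" and "\<forall>Q\<in>Qs0. primary_ideal Q" and "\<Inter>Qs0 = J"
    and "\<forall>Q\<in>Qs0. \<forall>Q'\<in>Qs0. ideal_radical Q = ideal_radical Q' \<longrightarrow> Q = Q'"
  shows "\<exists>Qs. minimal_primary_decomposition J Qs"
proof -
  define C where "C = {Qs. Qs \<subseteq> Qs0 \<and> \<Inter>Qs = J}"
  obtain Qs where Qs: "Qs \<in> C" "\<And>Qs'. Qs' \<in> C \<Longrightarrow> card Qs \<le> card Qs'"
    using ex_has_least_nat[of "\<lambda>Qs. Qs \<in> C" Qs0 card] assms(3) unfolding C_def by auto
  have sub: "Qs \<subseteq> Qs0" and "finite Qs" using Qs(1) assms(1) finite_subset unfolding C_def by auto
  have "\<Inter>(Qs - {Q}) \<noteq> J" if "Q \<in> Qs" for Q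
  proof
    assume "\<Inter>(Qs - {Q}) = J"
    then have "Qs - {Q} \<in> C" using sub unfolding C_def by auto
    then have "card Qs \<le> card (Qs - {Q})" by (rule Qs(2))
    then show False using card_Diff1_less[OF \<open>finite Qs\<close> that] by simp
  qed
  moreover have "\<Inter>Qs = J" using Qs(1) unfolding C_def by simp
  ultimately have "minimal_primary_decomposition J Qs"
    unfolding minimal_primary_decomposition_def using \<open>finite Qs\<close> sub assms(2,4) by (simp add: subset_iff)
  then show ?thesis by blast
qed

section \<open>Monomial ideals as sets of exponents\<close>

type_synonym 'v exponent = "'v \<Rightarrow>\<^sub>0 nat"

definition supported_polys :: "'v exponent set \<Rightarrow> ('v, 'k::field) mpoly set" where
  "supported_polys S = {f. Poly_Mapping.keys f \<subseteq> S}"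

definition upward_closed :: "'v exponent set \<Rightarrow> bool" where
  "upward_closed S \<longleftrightarrow> (\<forall>a\<in>S. \<forall>c. a + c \<in> S)"

text \<open>Exponents of the \<open>t\<close>-th power of a monomial ideal; the case \<open>t = 0\<close> mirrors \<^const>\<open>ideal_pow\<close>.\<close>

fun sumset_power :: "'v exponent set \<Rightarrow> nat \<Rightarrow> 'v exponent set" where
  "sumset_power S 0 = UNIV"
| "sumset_power S (Suc t) = S + sumset_power S t"

lemma upward_closedD: "upward_closed S \<Longrightarrow> a \<in> S \<Longrightarrow> a + c \<in> S"
  unfolding upward_closed_def by blast

lemma upward_closed_plus:
  assumes "upward_closed S" shows "upward_closed (S + T)"
  unfolding upward_closed_def
proof (intro ballI allI)
  fix a c assume "a \<in> S + T"
  then obtain x y where "a = x + y" "x \<in> S" "y \<in> T" by (auto elim: set_plus_elim)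
  moreover have "x + c \<in> S" using assms \<open>x \<in> S\<close> by (rule upward_closedD)
  ultimately show "a + c \<in> S + T" using set_plus_intro[of "x + c" S y T] by (simp add: ac_simps)
qed

lemma upward_closed_plus_UNIV: "upward_closed (A + UNIV)"
  using upward_closed_plus[of UNIV A] by (simp add: upward_closed_def add.commute)

lemma subset_plus_UNIV: "(A :: 'a::comm_monoid_add set) \<subseteq> A + UNIV"
  using set_zero_plus2[of UNIV A] by (simp add: add.commute)

lemma upward_closed_plus_UNIV_eq: "upward_closed S \<Longrightarrow> S + UNIV = S"
  using subset_plus_UNIV[of S] by (auto elim!: set_plus_elim intro: upward_closedD)

lemma upward_closed_UNIV: "upward_closed UNIV"
  by (simp add: upward_closed_def)

lemma upward_closed_sumset_power: "upward_closed S \<Longrightarrow> upward_closed (sumset_power S t)"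
  by (cases t) (simp_all add: upward_closed_UNIV upward_closed_plus)

lemma upward_closed_Inter: "(\<And>S. S \<in> K \<Longrightarrow> upward_closed S) \<Longrightarrow> upward_closed (\<Inter>K)"
  unfolding upward_closed_def by blast

lemma sumset_power_mono: "S \<subseteq> S' \<Longrightarrow> sumset_power S t \<subseteq> sumset_power S' t"
  by (induction t) (simp_all add: set_plus_mono2)

lemma is_ideal_supported_polys:
  assumes "upward_closed S" shows "is_ideal (supported_polys S :: ('v, 'k::field) mpoly set)"
proof -
  have "Poly_Mapping.keys (r * f) \<subseteq> S" if "Poly_Mapping.keys f \<subseteq> S" for r f :: "('v, 'k) mpoly"
  proof
    fix x assume "x \<in> Poly_Mapping.keys (r * f)"
    then obtain u v where "x = u + v" "u \<in> Poly_Mapping.keys r" "v \<in> Poly_Mapping.keys f"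
      using keys_mult[of r f] by blast
    then show "x \<in> S" using that upward_closedD[OF assms, of v u] by (auto simp: add.commute)
  qed
  moreover have "Poly_Mapping.keys (f + g) \<subseteq> S"
    if "Poly_Mapping.keys f \<subseteq> S" "Poly_Mapping.keys g \<subseteq> S" for f g :: "('v, 'k) mpoly"
    using keys_add[of f g] that by blast
  ultimately show ?thesis unfolding is_ideal_def supported_polys_def by auto
qed

lemma supported_polys_UNIV: "supported_polys UNIV = UNIV"
  unfolding supported_polys_def by auto

lemma supported_polys_mono: "S \<subseteq> T \<Longrightarrow> supported_polys S \<subseteq> supported_polys T"
  unfolding supported_polys_def by auto

lemma supported_polys_Inter: "supported_polys (\<Inter>K) = \<Inter>(supported_polys ` K)"
  unfolding supported_polys_def by auto

lemma keys_monom: "Poly_Mapping.keys (monom a :: ('v, 'k::field) mpoly) = {a}"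
  unfolding monom_def by simp

lemma monom_mem_supported_polys_iff:
  "(monom a :: ('v, 'k::field) mpoly) \<in> supported_polys S \<longleftrightarrow> a \<in> S"
  unfolding supported_polys_def by (simp add: keys_monom)

lemma supported_polys_inject:
  assumes "(supported_polys S :: ('v, 'k::field) mpoly set) = supported_polys T" shows "S = T"
  using assms monom_mem_supported_polys_iff[where 'k='k] by blast

lemma monom_mult: "monom a * monom b = (monom (a + b) :: ('v, 'k::field) mpoly)"
  unfolding monom_def by (simp add: mult_single)

lemma monom_zero: "monom 0 = (1 :: ('v, 'k::field) mpoly)"
  unfolding monom_def by (simp add: one_poly_mapping_def)

lemma one_not_in_supported_polys:
  "0 \<notin> S \<Longrightarrow> (1 :: ('v, 'k::field) mpoly) \<notin> supported_polys S"
  using monom_mem_supported_polys_iff[of 0 S] by (simp add: monom_zero)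

lemma poly_mapping_sum_single:
  "f = (\<Sum>a\<in>Poly_Mapping.keys f. Poly_Mapping.single a (Poly_Mapping.lookup f a))"
proof (rule poly_mapping_eqI)
  fix k
  have "(\<Sum>a\<in>Poly_Mapping.keys f. Poly_Mapping.lookup (Poly_Mapping.single a (Poly_Mapping.lookup f a)) k)
      = (\<Sum>a\<in>Poly_Mapping.keys f. if a = k then Poly_Mapping.lookup f a else 0)"
    by (intro sum.cong) (auto simp: lookup_single when_def)
  then show "Poly_Mapping.lookup f k
      = Poly_Mapping.lookup (\<Sum>a\<in>Poly_Mapping.keys f. Poly_Mapping.single a (Poly_Mapping.lookup f a)) k"
    by (simp add: lookup_sum in_keys_iff)
qed

lemma ideal_gen_monom: "ideal_gen (monom ` A) = (supported_polys (A + UNIV) :: ('v, 'k::field) mpoly set)"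
proof
  show "ideal_gen (monom ` A) \<subseteq> (supported_polys (A + UNIV) :: ('v, 'k) mpoly set)"
    by (rule ideal_gen_least[OF is_ideal_supported_polys[OF upward_closed_plus_UNIV]])
       (use subset_plus_UNIV[of A] in \<open>auto simp: monom_mem_supported_polys_iff\<close>)
next
  show "(supported_polys (A + UNIV) :: ('v, 'k) mpoly set) \<subseteq> ideal_gen (monom ` A)"
  proof
    fix f :: "('v, 'k) mpoly" assume f: "f \<in> supported_polys (A + UNIV)"
    have "Poly_Mapping.single a (Poly_Mapping.lookup f a) \<in> ideal_gen (monom ` A)"
      if a: "a \<in> Poly_Mapping.keys f" for a
    proof -
      have "a \<in> A + UNIV" using f a unfolding supported_polys_def by blast
      then obtain b c where bc: "a = b + c" "b \<in> A" by (auto elim: set_plus_elim)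
      have "Poly_Mapping.single a (Poly_Mapping.lookup f a)
          = Poly_Mapping.single c (Poly_Mapping.lookup f a) * monom b"
        by (simp add: bc monom_def mult_single add.commute)
      moreover have "monom b \<in> ideal_gen (monom ` A)" using bc(2) ideal_gen_superset by blast
      ultimately show ?thesis using ideal_mult_left[OF is_ideal_ideal_gen] by metis
    qed
    then have "(\<Sum>a\<in>Poly_Mapping.keys f. Poly_Mapping.single a (Poly_Mapping.lookup f a))
        \<in> ideal_gen (monom ` A)"
      by (intro ideal_sum[OF is_ideal_ideal_gen])
    then show "f \<in> ideal_gen (monom ` A)" using poly_mapping_sum_single[of f] by simp
  qed
qed

lemma supported_polys_eq_ideal_gen:
  "upward_closed S \<Longrightarrow> (supported_polys S :: ('v, 'k::field) mpoly set) = ideal_gen (monom ` S)"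
  by (simp add: ideal_gen_monom upward_closed_plus_UNIV_eq)

lemma monomial_idealE:
  assumes "monomial_ideal (I :: ('v, 'k::field) mpoly set)"
  obtains S where "upward_closed S" "I = supported_polys S"
  using assms upward_closed_plus_UNIV unfolding monomial_ideal_def by (auto simp: ideal_gen_monom)

lemma ideal_prod_supported_polys:
  assumes S: "upward_closed S" and T: "upward_closed T"
  shows "ideal_prod (supported_polys S) (supported_polys T)
    = (supported_polys (S + T) :: ('v, 'k::field) mpoly set)"
proof
  have "f * g \<in> supported_polys (S + T)"
    if "f \<in> supported_polys S" "g \<in> supported_polys T" for f g :: "('v, 'k) mpoly"
    using that keys_mult[of f g] unfolding supported_polys_def by (fastforce intro: set_plus_intro)
  then show "ideal_prod (supported_polys S) (supported_polys T)
      \<subseteq> (supported_polys (S + T) :: ('v, 'k) mpoly set)"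
    unfolding ideal_prod_def
    by (intro ideal_gen_least[OF is_ideal_supported_polys[OF upward_closed_plus[OF S]]]) blast
next
  have "monom x \<in> ideal_prod (supported_polys S) (supported_polys T :: ('v, 'k) mpoly set)"
    if "x \<in> S + T" for x
    using that mult_mem_ideal_prod[of "monom _" "supported_polys S" "monom _" "supported_polys T"]
    by (auto elim!: set_plus_elim simp: monom_mem_supported_polys_iff monom_mult)
  then show "supported_polys (S + T)
      \<subseteq> ideal_prod (supported_polys S) (supported_polys T :: ('v, 'k) mpoly set)"
    unfolding supported_polys_eq_ideal_gen[OF upward_closed_plus[OF S]]
    by (intro ideal_gen_least[OF is_ideal_ideal_prod]) blast
qed

lemma ideal_pow_supported_polys:
  "upward_closed S \<Longrightarrow>
    ideal_pow (supported_polys S) t = (supported_polys (sumset_power S t) :: ('v, 'k::field) mpoly set)"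
  by (induction t)
    (simp_all add: supported_polys_UNIV ideal_prod_supported_polys upward_closed_sumset_power)

definition deg_on :: "'v set \<Rightarrow> 'v exponent \<Rightarrow> nat" where
  "deg_on W a = (\<Sum>i\<in>W. Poly_Mapping.lookup a i)"

definition scale_exp :: "nat \<Rightarrow> 'v exponent \<Rightarrow> 'v exponent" where
  "scale_exp m a = Abs_poly_mapping (\<lambda>i. m * Poly_Mapping.lookup a i)"

definition unit_exp :: "'v \<Rightarrow> 'v exponent" where
  "unit_exp i = Poly_Mapping.single i 1"

lemma lookup_scale_exp [simp]: "Poly_Mapping.lookup (scale_exp m a) i = m * Poly_Mapping.lookup a i"
proof -
  have "finite {i. m * Poly_Mapping.lookup a i \<noteq> 0}"
    by (rule finite_subset[of _ "Poly_Mapping.keys a"]) (auto simp: in_keys_iff)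
  then show ?thesis unfolding scale_exp_def by (simp add: lookup_Abs_poly_mapping)
qed

lemma lookup_unit_exp: "Poly_Mapping.lookup (unit_exp i) j = (if i = j then 1 else 0)"
  unfolding unit_exp_def by (simp add: lookup_single when_def)

lemma scale_exp_0 [simp]: "scale_exp 0 a = 0"
  by (rule poly_mapping_eqI) simp

lemma scale_exp_Suc: "scale_exp (Suc m) a = a + scale_exp m a"
  by (rule poly_mapping_eqI) (simp add: lookup_add)

lemma scale_exp_mult: "scale_exp (m * n) a = scale_exp n (scale_exp m a)"
  by (rule poly_mapping_eqI) (simp add: algebra_simps)

lemma scale_exp_unit_exp: "scale_exp k (unit_exp i) = Poly_Mapping.single i k"
  by (rule poly_mapping_eqI) (simp add: lookup_unit_exp lookup_single when_def)

lemma exp_eq_plus_diff: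
  fixes a b :: "'v exponent"
  assumes "\<And>i. Poly_Mapping.lookup a i \<le> Poly_Mapping.lookup b i"
  shows "b = a + (b - a)"
  by (rule poly_mapping_eqI) (use assms in \<open>simp add: lookup_add lookup_minus\<close>)

lemma deg_on_add: "deg_on W (a + b) = deg_on W a + deg_on W b"
  unfolding deg_on_def by (simp add: lookup_add sum.distrib)

lemma deg_on_zero [simp]: "deg_on W 0 = 0"
  unfolding deg_on_def by simp

lemma deg_on_scale_exp: "deg_on W (scale_exp m a) = m * deg_on W a"
  unfolding deg_on_def by (simp add: sum_distrib_left)

lemma deg_on_unit_exp: "finite W \<Longrightarrow> deg_on W (unit_exp i) = (if i \<in> W then 1 else 0)"
  unfolding deg_on_def by (simp add: lookup_unit_exp)

lemma deg_on_diff: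
  assumes "\<And>i. Poly_Mapping.lookup b i \<le> Poly_Mapping.lookup a i"
  shows "deg_on W (a - b) = deg_on W a - deg_on W b"
  using deg_on_add[of W b "a - b"] exp_eq_plus_diff[OF assms] by simp

subsection \<open>Minimal terms\<close>

text \<open>The key orders exponents first by their degree on \<open>W\<close>, then lexicographically; the encoding
  \<^const>\<open>to_nat\<close> of the variables only serves to reach a linear order on \<^typ>\<open>nat \<Rightarrow>\<^sub>0 nat\<close>.\<close>

definition deg_lex_key :: "'v set \<Rightarrow> 'v::finite exponent \<Rightarrow> (nat \<Rightarrow>\<^sub>0 nat)" where
  "deg_lex_key W a = Poly_Mapping.single 0 (deg_on W a)
     + (\<Sum>i\<in>UNIV. Poly_Mapping.single (Suc (to_nat i)) (Poly_Mapping.lookup a i))"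

definition is_min_term :: "('v exponent \<Rightarrow> (nat \<Rightarrow>\<^sub>0 nat)) \<Rightarrow> ('v, 'k::field) mpoly \<Rightarrow> 'v exponent \<Rightarrow> bool"
  where "is_min_term key f a \<longleftrightarrow> a \<in> Poly_Mapping.keys f \<and> (\<forall>b\<in>Poly_Mapping.keys f. key a \<le> key b)"

lemma deg_lex_key_add: "deg_lex_key W (a + b) = deg_lex_key W a + deg_lex_key W b"
  unfolding deg_lex_key_def by (simp add: deg_on_add lookup_add single_add sum.distrib ac_simps)

lemma inj_deg_lex_key: "inj (deg_lex_key W :: 'v::finite exponent \<Rightarrow> _)"
proof (rule injI)
  fix a b :: "'v exponent" assume eq: "deg_lex_key W a = deg_lex_key W b"
  have "Poly_Mapping.lookup (deg_lex_key W a) (Suc (to_nat i)) = Poly_Mapping.lookup a i" for a i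
  proof -
    have "(\<Sum>j\<in>UNIV. Poly_Mapping.lookup
          (Poly_Mapping.single (Suc (to_nat j)) (Poly_Mapping.lookup a j)) (Suc (to_nat i)))
        = (\<Sum>j\<in>UNIV. if j = i then Poly_Mapping.lookup a j else 0)"
      by (intro sum.cong) (auto simp: lookup_single when_def)
    then show ?thesis unfolding deg_lex_key_def by (simp add: lookup_add lookup_sum lookup_single)
  qed
  then show "a = b" using eq by (intro poly_mapping_eqI) metis
qed

lemma deg_lex_key_less:
  assumes "deg_on W a < deg_on W b" shows "deg_lex_key W a < deg_lex_key W b"
proof -
  have "Poly_Mapping.lookup (deg_lex_key W a) 0 = deg_on W a" for a
    unfolding deg_lex_key_def by (simp add: lookup_add lookup_sum lookup_single)
  then have "less_fun (Poly_Mapping.lookup (deg_lex_key W a)) (Poly_Mapping.lookup (deg_lex_key W b))"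
    using assms by (intro less_funI exI[of _ 0]) simp
  then show ?thesis by (simp add: less_poly_mapping.rep_eq)
qed

lemma is_min_term_deg_on:
  assumes "is_min_term (deg_lex_key W) f a" and "b \<in> Poly_Mapping.keys f"
  shows "deg_on W a \<le> deg_on W b"
  using assms deg_lex_key_less[of W b a] unfolding is_min_term_def by (meson leD not_le)

lemma is_min_term_exists:
  assumes "f \<noteq> 0" obtains a where "is_min_term key f a"
proof -
  have "Min (key ` Poly_Mapping.keys f) \<in> key ` Poly_Mapping.keys f"
    using assms by (intro Min_in) auto
  then obtain a where a: "a \<in> Poly_Mapping.keys f" "key a = Min (key ` Poly_Mapping.keys f)" by auto
  then have "\<forall>b\<in>Poly_Mapping.keys f. key a \<le> key b" by simp
  then show ?thesis using that a(1) unfolding is_min_term_def by blast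
qed

lemma lookup_mult_eq_zero:
  assumes "\<And>u v. u \<in> Poly_Mapping.keys p \<Longrightarrow> v \<in> Poly_Mapping.keys q \<Longrightarrow> u + v \<noteq> k"
  shows "Poly_Mapping.lookup (p * q) k = 0"
proof -
  have "k \<notin> Poly_Mapping.keys (p * q)" using keys_mult[of p q] assms by blast
  then show ?thesis by (simp add: in_keys_iff)
qed

lemma is_min_term_mult:
  fixes f g :: "('v, 'k::field) mpoly" and key :: "'v exponent \<Rightarrow> (nat \<Rightarrow>\<^sub>0 nat)"
  assumes inj: "inj key" and add: "\<And>x y. key (x + y) = key x + key y"
    and a: "is_min_term key f a" and b: "is_min_term key g b"
  shows "Poly_Mapping.lookup (f * g) (a + b) = Poly_Mapping.lookup f a * Poly_Mapping.lookup g b"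
    and "is_min_term key (f * g) (a + b)"
proof -
  have unique: "u = a" if "u \<in> Poly_Mapping.keys f" "v \<in> Poly_Mapping.keys g" "u + v = a + b" for u v
  proof -
    have "key a \<le> key u" "key b \<le> key v" using a b that unfolding is_min_term_def by auto
    moreover have "key u + key v = key a + key b" using add that(3) by metis
    ultimately have "key u = key a" using add_less_le_mono[of "key a" "key u" "key b" "key v"]
      by (metis order_le_less less_irrefl)
    then show ?thesis using inj by (simp add: inj_eq)
  qed
  define ca cb where "ca = Poly_Mapping.lookup f a" and "cb = Poly_Mapping.lookup g b"
  define f' g' where "f' = f - Poly_Mapping.single a ca" and "g' = g - Poly_Mapping.single b cb"
  have keys_f': "Poly_Mapping.keys f' \<subseteq> Poly_Mapping.keys f - {a}"
    unfolding f'_def ca_def by (auto simp: in_keys_iff lookup_minus lookup_single when_def split: if_splits)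
  have keys_g': "Poly_Mapping.keys g' \<subseteq> Poly_Mapping.keys g - {b}"
    unfolding g'_def cb_def by (auto simp: in_keys_iff lookup_minus lookup_single when_def split: if_splits)
  have "f * g = Poly_Mapping.single (a + b) (ca * cb) + Poly_Mapping.single a ca * g' + f' * g"
    unfolding f'_def g'_def by (simp add: algebra_simps mult_single)
  moreover have "Poly_Mapping.lookup (Poly_Mapping.single a ca * g') (a + b) = 0"
    by (rule lookup_mult_eq_zero) (use keys_g' in \<open>auto split: if_splits\<close>)
  moreover have "Poly_Mapping.lookup (f' * g) (a + b) = 0"
    by (rule lookup_mult_eq_zero) (use keys_f' unique in blast)
  ultimately show lookup:
    "Poly_Mapping.lookup (f * g) (a + b) = Poly_Mapping.lookup f a * Poly_Mapping.lookup g b"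
    by (simp add: lookup_add ca_def cb_def)
  have "Poly_Mapping.lookup f a \<noteq> 0" "Poly_Mapping.lookup g b \<noteq> 0"
    using a b unfolding is_min_term_def by (auto simp: in_keys_iff)
  then have "a + b \<in> Poly_Mapping.keys (f * g)" using lookup by (simp add: in_keys_iff)
  moreover have "key (a + b) \<le> key w" if w: "w \<in> Poly_Mapping.keys (f * g)" for w
  proof -
    obtain u v where "w = u + v" "u \<in> Poly_Mapping.keys f" "v \<in> Poly_Mapping.keys g"
      using keys_mult[of f g] w by blast
    then show ?thesis using a b add unfolding is_min_term_def by (simp add: add_mono)
  qed
  ultimately show "is_min_term key (f * g) (a + b)" unfolding is_min_term_def by blast
qed

lemma is_min_term_power:
  fixes f :: "('v, 'k::field) mpoly"
  assumes "inj key" and "\<And>x y. key (x + y) = key x + key y" and "is_min_term key f a"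
  shows "is_min_term key (f ^ Suc m) (scale_exp (Suc m) a)"
proof (induction m)
  case 0 then show ?case using assms(3) by (simp add: scale_exp_Suc)
next
  case (Suc m)
  then show ?case
    using is_min_term_mult(2)[OF assms Suc] by (simp add: scale_exp_Suc[of "Suc m"])
qed

subsection \<open>The monomial primes \<open>P_F\<close>\<close>

definition exps_on :: "'v set \<Rightarrow> 'v exponent set" where
  "exps_on F = {c. \<forall>i. i \<notin> F \<longrightarrow> Poly_Mapping.lookup c i = 0}"

definition prime_exps :: "'v set \<Rightarrow> 'v exponent set" where
  "prime_exps F = {a. \<exists>i. i \<notin> F \<and> 0 < Poly_Mapping.lookup a i}"

text \<open>Exponent sets of ideals on which the variables \<open>x_i\<close>, \<open>i \<in> F\<close>, are non-zero-divisors.\<close>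

definition saturated_exps :: "'v set \<Rightarrow> 'v exponent set \<Rightarrow> bool" where
  "saturated_exps F T \<longleftrightarrow> (\<forall>a c. c \<in> exps_on F \<longrightarrow> a + c \<in> T \<longrightarrow> a \<in> T)"

definition exp_saturation :: "'v set \<Rightarrow> 'v exponent set \<Rightarrow> 'v exponent set" where
  "exp_saturation F S = {a. \<exists>c\<in>exps_on F. a + c \<in> S}"

lemma exps_on_add: "a \<in> exps_on F \<Longrightarrow> b \<in> exps_on F \<Longrightarrow> a + b \<in> exps_on F"
  unfolding exps_on_def by (simp add: lookup_add)

lemma exps_on_zero: "0 \<in> exps_on F"
  unfolding exps_on_def by simp

lemma exps_on_sum: "(\<And>x. x \<in> X \<Longrightarrow> c x \<in> exps_on F) \<Longrightarrow> sum c X \<in> exps_on F"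
  by (induction X rule: infinite_finite_induct) (auto simp: exps_on_zero exps_on_add)

lemma exps_on_scale_exp: "a \<in> exps_on F \<Longrightarrow> scale_exp m a \<in> exps_on F"
  unfolding exps_on_def by simp

lemma not_in_prime_exps_iff: "a \<notin> prime_exps F \<longleftrightarrow> a \<in> exps_on F"
  unfolding prime_exps_def exps_on_def by auto

lemma exps_on_iff_deg_on: "(a :: 'v::finite exponent) \<in> exps_on F \<longleftrightarrow> deg_on (-F) a = 0"
  unfolding exps_on_def deg_on_def by (auto simp: sum_eq_0_iff)

lemma prime_exps_iff_deg_on: "(a :: 'v::finite exponent) \<in> prime_exps F \<longleftrightarrow> 0 < deg_on (-F) a"
  using not_in_prime_exps_iff[of a F] exps_on_iff_deg_on[of a F] by auto

lemma unit_exp_in_prime_exps_iff: "unit_exp i \<in> prime_exps F \<longleftrightarrow> i \<notin> F"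
  unfolding prime_exps_def by (auto simp: lookup_unit_exp)

lemma zero_not_in_prime_exps: "0 \<notin> prime_exps F"
  unfolding prime_exps_def by simp

lemma upward_closed_prime_exps: "upward_closed (prime_exps F)"
  unfolding upward_closed_def prime_exps_def by (auto simp: lookup_add)

lemma saturated_exps_prime_exps: "saturated_exps F (prime_exps F)"
  unfolding saturated_exps_def prime_exps_def exps_on_def by (auto simp: lookup_add)

lemma unit_exps_plus_UNIV: "unit_exp ` (- F) + UNIV = prime_exps F"
proof
  show "unit_exp ` (- F) + UNIV \<subseteq> prime_exps F"
    by (auto elim!: set_plus_elim simp: prime_exps_def lookup_add lookup_unit_exp)
next
  show "prime_exps F \<subseteq> unit_exp ` (- F) + UNIV"
  proof
    fix a assume "a \<in> prime_exps F"
    then obtain i where i: "i \<notin> F" "0 < Poly_Mapping.lookup a i" unfolding prime_exps_def by auto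
    have eq: "a = unit_exp i + (a - unit_exp i)"
      by (rule exp_eq_plus_diff) (use i in \<open>auto simp: lookup_unit_exp\<close>)
    show "a \<in> unit_exp ` (- F) + UNIV"
      by (subst eq) (use i(1) in \<open>auto intro: set_plus_intro\<close>)
  qed
qed

lemma P_ideal_eq_supported_polys: "P_ideal F = (supported_polys (prime_exps F) :: ('v, 'k::field) mpoly set)"
proof -
  have "var ` (- F) = (monom ` unit_exp ` (- F) :: ('v, 'k) mpoly set)"
    by (auto simp: var_def unit_exp_def)
  then show ?thesis unfolding P_ideal_def by (simp add: ideal_gen_monom unit_exps_plus_UNIV)
qed

lemma split_by_support:
  fixes f :: "('v, 'k::field) mpoly"
  obtains f1 f2 where "f = f1 + f2" "Poly_Mapping.keys f1 \<subseteq> T" "Poly_Mapping.keys f2 \<inter> T = {}"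
proof -
  define f1 where "f1 = (\<Sum>a\<in>Poly_Mapping.keys f \<inter> T. Poly_Mapping.single a (Poly_Mapping.lookup f a))"
  have lookup_f1: "Poly_Mapping.lookup f1 k = (if k \<in> T then Poly_Mapping.lookup f k else 0)" for k
  proof -
    have "Poly_Mapping.lookup f1 k
        = (\<Sum>a\<in>Poly_Mapping.keys f \<inter> T. if a = k then Poly_Mapping.lookup f a else 0)"
      unfolding f1_def lookup_sum by (intro sum.cong) (auto simp: lookup_single when_def)
    then show ?thesis by (auto simp: in_keys_iff)
  qed
  show ?thesis
  proof (rule that[of f1 "f - f1"])
    show "Poly_Mapping.keys f1 \<subseteq> T" using lookup_f1 by (auto simp: in_keys_iff split: if_splits)
    show "Poly_Mapping.keys (f - f1) \<inter> T = {}"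
      using lookup_f1 by (auto simp: in_keys_iff lookup_minus)
  qed simp
qed

text \<open>Order terms by their degree in the variables outside \<open>F\<close>: the minimal term of \<open>s \<notin> P_F\<close> involves
  only variables of \<open>F\<close>, so its product with the minimal term of the part of \<open>f\<close> outside \<open>T\<close>
  survives in \<open>s f\<close> and still lies outside \<open>T\<close>.\<close>

lemma supported_polys_mult_cancel:
  fixes s f :: "('v::finite, 'k::field) mpoly"
  assumes T: "upward_closed T" "saturated_exps F T"
    and s: "s \<notin> supported_polys (prime_exps F)" and sf: "s * f \<in> supported_polys T"
  shows "f \<in> supported_polys T"
proof -
  obtain f1 f2 where f: "f = f1 + f2" "Poly_Mapping.keys f1 \<subseteq> T" "Poly_Mapping.keys f2 \<inter> T = {}"
    by (rule split_by_support)
  have f1: "f1 \<in> supported_polys T" using f(2) unfolding supported_polys_def by auto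
  have "f2 = 0"
  proof (rule ccontr)
    assume "f2 \<noteq> 0"
    let ?key = "deg_lex_key (-F)"
    have "s \<noteq> 0" using s ideal_zero[OF is_ideal_supported_polys[OF upward_closed_prime_exps]] by metis
    then obtain b where b: "is_min_term ?key s b" by (rule is_min_term_exists)
    obtain a where a: "is_min_term ?key f2 a" using \<open>f2 \<noteq> 0\<close> by (rule is_min_term_exists)
    obtain b1 where "b1 \<in> Poly_Mapping.keys s" "b1 \<notin> prime_exps F"
      using s unfolding supported_polys_def by auto
    then have "deg_on (-F) b \<le> 0"
      using is_min_term_deg_on[OF b] by (metis exps_on_iff_deg_on not_in_prime_exps_iff)
    then have "b \<in> exps_on F" by (simp add: exps_on_iff_deg_on)
    have "is_min_term ?key (s * f2) (b + a)"
      by (rule is_min_term_mult(2)[OF inj_deg_lex_key deg_lex_key_add b a])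
    then have "b + a \<in> Poly_Mapping.keys (s * f2)" unfolding is_min_term_def by auto
    moreover have "s * f2 \<in> supported_polys T"
    proof -
      have "s * f1 \<in> supported_polys T" by (rule ideal_mult_left[OF is_ideal_supported_polys[OF T(1)] f1])
      then have "s * f - s * f1 \<in> supported_polys T"
        by (rule ideal_diff[OF is_ideal_supported_polys[OF T(1)] sf])
      then show ?thesis using f(1) by (simp add: algebra_simps)
    qed
    ultimately have "a + b \<in> T" unfolding supported_polys_def by (auto simp: add.commute)
    then have "a \<in> T" using T(2) \<open>b \<in> exps_on F\<close> unfolding saturated_exps_def by blast
    then show False using a f(3) unfolding is_min_term_def by blast
  qed
  then show ?thesis using f1 f(1) by simp
qed

lemma prime_ideal_P_ideal: "prime_ideal (P_ideal F :: ('v::finite, 'k::field) mpoly set)"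
  unfolding prime_ideal_def P_ideal_eq_supported_polys
proof (intro conjI allI impI)
  show "is_ideal (supported_polys (prime_exps F) :: ('v, 'k) mpoly set)"
    by (rule is_ideal_supported_polys[OF upward_closed_prime_exps])
  show "supported_polys (prime_exps F) \<noteq> (UNIV :: ('v, 'k) mpoly set)"
    using one_not_in_supported_polys[OF zero_not_in_prime_exps] by blast
  fix a b :: "('v, 'k) mpoly" assume "a * b \<in> supported_polys (prime_exps F)"
  then show "a \<in> supported_polys (prime_exps F) \<or> b \<in> supported_polys (prime_exps F)"
    using supported_polys_mult_cancel[OF upward_closed_prime_exps saturated_exps_prime_exps] by blast
qed

lemma P_ideal_inject:
  assumes "(P_ideal F :: ('v::finite, 'k::field) mpoly set) = P_ideal G" shows "F = G"
proof -
  have "prime_exps F = prime_exps G"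
    using assms unfolding P_ideal_eq_supported_polys by (rule supported_polys_inject)
  then have "unit_exp i \<in> prime_exps F \<longleftrightarrow> unit_exp i \<in> prime_exps G" for i by simp
  then show ?thesis unfolding unit_exp_in_prime_exps_iff by auto
qed

lemma P_ideal_antimono: "F \<subseteq> G \<Longrightarrow> (P_ideal G :: ('v::finite, 'k::field) mpoly set) \<subseteq> P_ideal F"
  unfolding P_ideal_eq_supported_polys by (rule supported_polys_mono) (auto simp: prime_exps_def)

lemma upward_closed_exp_saturation:
  assumes "upward_closed S" shows "upward_closed (exp_saturation F S)"
  unfolding upward_closed_def exp_saturation_def
proof (intro ballI allI, clarify)
  fix a c' c assume "c \<in> exps_on F" "a + c \<in> S"
  moreover have "a + c' + c = (a + c) + c'" by (simp add: ac_simps)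
  ultimately show "\<exists>c\<in>exps_on F. a + c' + c \<in> S" using upward_closedD[OF assms] by metis
qed

lemma saturated_exps_exp_saturation: "saturated_exps F (exp_saturation F S)"
  unfolding saturated_exps_def exp_saturation_def by (auto simp: add.assoc intro: exps_on_add)

lemma subset_exp_saturation: "S \<subseteq> exp_saturation F S"
  unfolding exp_saturation_def using exps_on_zero by force

lemma sumset_power_exp_saturation:
  "sumset_power (exp_saturation F S) t \<subseteq> exp_saturation F (sumset_power S t)"
proof (induction t)
  case 0 then show ?case by (auto simp: exp_saturation_def intro: exps_on_zero)
next
  case (Suc t)
  show ?case
  proof
    fix x assume "x \<in> sumset_power (exp_saturation F S) (Suc t)"
    then obtain y z where yz: "x = y + z" "y \<in> exp_saturation F S"
      "z \<in> sumset_power (exp_saturation F S) t" by (auto elim: set_plus_elim)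
    obtain c1 where c1: "c1 \<in> exps_on F" "y + c1 \<in> S"
      using yz(2) unfolding exp_saturation_def by auto
    obtain c2 where c2: "c2 \<in> exps_on F" "z + c2 \<in> sumset_power S t"
      using yz(3) Suc unfolding exp_saturation_def by auto
    have "x + (c1 + c2) = (y + c1) + (z + c2)" using yz(1) by (simp add: ac_simps)
    then have "x + (c1 + c2) \<in> sumset_power S (Suc t)" using c1 c2 by (auto intro: set_plus_intro)
    then show "x \<in> exp_saturation F (sumset_power S (Suc t))"
      unfolding exp_saturation_def using exps_on_add[OF c1(1) c2(1)] by blast
  qed
qed

lemma saturation_supported_polys:
  assumes S: "upward_closed S"
  shows "saturation (supported_polys S) (P_ideal F)
    = (supported_polys (exp_saturation F S) :: ('v::finite, 'k::field) mpoly set)"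
proof
  show "saturation (supported_polys S) (P_ideal F)
      \<subseteq> (supported_polys (exp_saturation F S) :: ('v, 'k) mpoly set)"
  proof
    fix f :: "('v, 'k) mpoly" assume "f \<in> saturation (supported_polys S) (P_ideal F)"
    then obtain s where s: "s \<notin> supported_polys (prime_exps F)" "s * f \<in> supported_polys S"
      unfolding saturation_def P_ideal_eq_supported_polys by auto
    have "s * f \<in> supported_polys (exp_saturation F S)"
      using s(2) supported_polys_mono[OF subset_exp_saturation] by blast
    then show "f \<in> supported_polys (exp_saturation F S)"
      by (rule supported_polys_mult_cancel[OF upward_closed_exp_saturation[OF S]
            saturated_exps_exp_saturation s(1)])
  qed
next
  show "supported_polys (exp_saturation F S)
      \<subseteq> (saturation (supported_polys S) (P_ideal F) :: ('v, 'k) mpoly set)"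
  proof
    fix f :: "('v, 'k) mpoly" assume f: "f \<in> supported_polys (exp_saturation F S)"
    then have "\<forall>a\<in>Poly_Mapping.keys f. \<exists>c. c \<in> exps_on F \<and> a + c \<in> S"
      unfolding supported_polys_def exp_saturation_def by blast
    then obtain c where c: "\<And>a. a \<in> Poly_Mapping.keys f \<Longrightarrow> c a \<in> exps_on F \<and> a + c a \<in> S"
      by metis
    \<comment> \<open>a single monomial in the variables of \<open>F\<close> moves all terms of \<open>f\<close> into \<open>S\<close>\<close>
    define C where "C = sum c (Poly_Mapping.keys f)"
    have "C \<in> exps_on F" unfolding C_def using c by (intro exps_on_sum) auto
    then have "monom C \<notin> (supported_polys (prime_exps F) :: ('v, 'k) mpoly set)"
      by (simp add: monom_mem_supported_polys_iff not_in_prime_exps_iff)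
    moreover have "monom C * f \<in> supported_polys S"
      unfolding supported_polys_def
    proof (rule CollectI, rule subsetI)
      fix x assume "x \<in> Poly_Mapping.keys (monom C * f)"
      then obtain v where x: "x = C + v" "v \<in> Poly_Mapping.keys f"
        using keys_mult[of "monom C" f] by (auto simp: keys_monom)
      have "C = c v + sum c (Poly_Mapping.keys f - {v})"
        unfolding C_def using x(2) by (simp add: sum.remove)
      then have "x = (v + c v) + sum c (Poly_Mapping.keys f - {v})" using x(1) by (simp add: ac_simps)
      then show "x \<in> S" using c[OF x(2)] upward_closedD[OF S] by metis
    qed
    ultimately show "f \<in> saturation (supported_polys S) (P_ideal F)"
      unfolding saturation_def P_ideal_eq_supported_polys by blast
  qed
qed

lemma keys_mult_deg_on:
  fixes f g :: "('v, 'k::field) mpoly"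
  assumes "Poly_Mapping.keys f \<subseteq> {a. p \<le> deg_on W a}" "Poly_Mapping.keys g \<subseteq> {a. q \<le> deg_on W a}"
  shows "Poly_Mapping.keys (f * g) \<subseteq> {a. p + q \<le> deg_on W a}"
proof
  fix x assume "x \<in> Poly_Mapping.keys (f * g)"
  then obtain u v where "x = u + v" "u \<in> Poly_Mapping.keys f" "v \<in> Poly_Mapping.keys g"
    using keys_mult by blast
  with assms show "x \<in> {a. p + q \<le> deg_on W a}" by (auto simp: deg_on_add intro: add_mono)
qed

lemma keys_power_deg_on:
  fixes f :: "('v, 'k::field) mpoly"
  assumes "Poly_Mapping.keys f \<subseteq> {a. p \<le> deg_on W a}"
  shows "Poly_Mapping.keys (f ^ m) \<subseteq> {a. m * p \<le> deg_on W a}"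
proof (induction m)
  case 0
  have "Poly_Mapping.keys (1 :: ('v, 'k) mpoly) \<subseteq> {0}" by simp
  then show ?case by auto
next
  case (Suc m)
  then show ?case using keys_mult_deg_on[OF assms Suc] by simp
qed

lemma power_mem_if_pure_powers:
  fixes T :: "'v::finite exponent set"
  assumes T: "upward_closed T" and N: "\<And>i. i \<notin> F \<Longrightarrow> scale_exp (N i) (unit_exp i) \<in> T"
    and b: "b \<in> (P_ideal F :: ('v, 'k::field) mpoly set)"
  shows "b ^ Suc (\<Sum>i\<in>-F. N i) \<in> supported_polys T"
proof -
  define M where "M = Suc (\<Sum>i\<in>-F. N i)"
  have "Poly_Mapping.keys b \<subseteq> {a. 1 \<le> deg_on (-F) a}"
    using b unfolding P_ideal_eq_supported_polys supported_polys_def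
    by (auto simp: prime_exps_iff_deg_on)
  then have keys: "Poly_Mapping.keys (b ^ M) \<subseteq> {a. M \<le> deg_on (-F) a}"
    using keys_power_deg_on[of b 1 "-F" M] by simp
  have "a \<in> T" if "M \<le> deg_on (-F) a" for a
  proof -
    \<comment> \<open>pigeonhole: some exponent \<open>a_i\<close> with \<open>i \<notin> F\<close> reaches \<open>N i\<close>\<close>
    have "\<exists>i\<in>-F. N i \<le> Poly_Mapping.lookup a i"
    proof (rule ccontr)
      assume "\<not> ?thesis"
      then have "deg_on (-F) a \<le> (\<Sum>i\<in>-F. N i)"
        unfolding deg_on_def by (intro sum_mono) (auto simp: not_le intro: less_imp_le)
      then show False using that unfolding M_def by simp
    qed
    then obtain i where i: "i \<notin> F" "N i \<le> Poly_Mapping.lookup a i" by auto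
    have "a = scale_exp (N i) (unit_exp i) + (a - scale_exp (N i) (unit_exp i))"
      by (rule exp_eq_plus_diff) (use i(2) in \<open>auto simp: lookup_unit_exp\<close>)
    then show ?thesis using upward_closedD[OF T N[OF i(1)]] by metis
  qed
  then show ?thesis using keys unfolding supported_polys_def M_def by auto
qed

lemma supported_polys_primary:
  fixes T :: "'v::finite exponent set"
  assumes T: "upward_closed T" "saturated_exps F T" "0 \<notin> T"
    and powers: "\<And>i. i \<notin> F \<Longrightarrow> \<exists>N. scale_exp N (unit_exp i) \<in> T"
  shows "primary_ideal (supported_polys T :: ('v, 'k::field) mpoly set)"
    and "ideal_radical (supported_polys T :: ('v, 'k) mpoly set) = P_ideal F"
proof -
  obtain N where "\<And>i. i \<notin> F \<Longrightarrow> scale_exp (N i) (unit_exp i) \<in> T" using powers by metis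
  note power_mem = power_mem_if_pure_powers[OF T(1) this, where 'k='k]
  have "T \<subseteq> prime_exps F"
  proof
    fix a assume "a \<in> T"
    then show "a \<in> prime_exps F"
      using T(2,3) not_in_prime_exps_iff[of a F] unfolding saturated_exps_def by (metis add_0)
  qed
  then have subset: "supported_polys T \<subseteq> (P_ideal F :: ('v, 'k) mpoly set)"
    unfolding P_ideal_eq_supported_polys by (rule supported_polys_mono)
  show "primary_ideal (supported_polys T :: ('v, 'k) mpoly set)"
    unfolding primary_ideal_def
  proof (intro conjI allI impI)
    show "is_ideal (supported_polys T :: ('v, 'k) mpoly set)" by (rule is_ideal_supported_polys[OF T(1)])
    show "supported_polys T \<noteq> (UNIV :: ('v, 'k) mpoly set)" using one_not_in_supported_polys[OF T(3)] by blast
    fix a b :: "('v, 'k) mpoly" assume ab: "a * b \<in> supported_polys T"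
    show "a \<in> supported_polys T \<or> (\<exists>m. b ^ m \<in> supported_polys T)"
    proof (cases "b \<in> P_ideal F")
      case True then show ?thesis using power_mem by blast
    next
      case False
      then show ?thesis using supported_polys_mult_cancel[OF T(1,2), of b a] ab
        by (simp add: mult.commute P_ideal_eq_supported_polys)
    qed
  qed
  show "ideal_radical (supported_polys T :: ('v, 'k) mpoly set) = P_ideal F"
  proof
    show "ideal_radical (supported_polys T :: ('v, 'k) mpoly set) \<subseteq> P_ideal F"
      by (rule radical_subset_prime[OF prime_ideal_P_ideal subset])
    show "P_ideal F \<subseteq> ideal_radical (supported_polys T :: ('v, 'k) mpoly set)"
      unfolding ideal_radical_def using power_mem by blast
  qed
qed

subsection \<open>Primary decompositions of monomial ideals\<close>

lemma dickson_on:
  fixes W :: "'v set" and S :: "'v exponent set"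
  assumes "finite W"
  shows "\<exists>B\<subseteq>S. finite B \<and> (\<forall>a\<in>S. \<exists>b\<in>B. \<forall>i\<in>W. Poly_Mapping.lookup b i \<le> Poly_Mapping.lookup a i)"
  using assms
proof (induction W arbitrary: S rule: finite_induct)
  case empty
  show ?case by (cases "S = {}") (auto intro!: exI[of _ "{SOME x. x \<in> S}"] some_in_eq[THEN iffD2])
next
  case (insert w W)
  let ?le = "\<lambda>W b a. \<forall>i\<in>W. Poly_Mapping.lookup b i \<le> Poly_Mapping.lookup a i"
  obtain B0 where B0: "B0 \<subseteq> S" "finite B0" "\<forall>a\<in>S. \<exists>b\<in>B0. ?le W b a"
    using insert.IH[of S] by blast
  \<comment> \<open>the elements of \<open>S\<close> whose \<open>w\<close>-coordinate is below the bound \<open>M\<close> of \<open>B0\<close> are handled by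
    the induction hypothesis applied to each level set of that coordinate\<close>
  define M where "M = Max (insert 0 ((\<lambda>b. Poly_Mapping.lookup b w) ` B0))"
  have M: "Poly_Mapping.lookup b w \<le> M" if "b \<in> B0" for b
    unfolding M_def using B0(2) that by (intro Max_ge) auto
  define level where "level k = {a\<in>S. Poly_Mapping.lookup a w = k}" for k
  have "\<forall>k. \<exists>B\<subseteq>level k. finite B \<and> (\<forall>a\<in>level k. \<exists>b\<in>B. ?le W b a)"
    using insert.IH by blast
  then obtain Bk where Bk: "\<And>k. Bk k \<subseteq> level k" "\<And>k. finite (Bk k)"
      "\<And>k. \<forall>a\<in>level k. \<exists>b\<in>Bk k. ?le W b a"
    by metis
  define B where "B = B0 \<union> (\<Union>k<M. Bk k)"
  have "\<exists>b\<in>B. ?le (insert w W) b a" if a: "a \<in> S" for a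
  proof (cases "M \<le> Poly_Mapping.lookup a w")
    case True
    then obtain b where "b \<in> B0" "?le W b a" "Poly_Mapping.lookup b w \<le> Poly_Mapping.lookup a w"
      using B0(3) a M by (meson order_trans)
    then show ?thesis unfolding B_def by auto
  next
    case False
    obtain b where b: "b \<in> Bk (Poly_Mapping.lookup a w)" "?le W b a"
      using Bk(3) a unfolding level_def by blast
    have "Poly_Mapping.lookup b w = Poly_Mapping.lookup a w"
      using Bk(1) b(1) unfolding level_def by blast
    moreover have "b \<in> B" using b(1) False unfolding B_def by (auto simp: not_le)
    ultimately show ?thesis using b(2) by (intro bexI[of _ b]) auto
  qed
  moreover have "B \<subseteq> S" "finite B"
    unfolding B_def using B0(1,2) Bk(1,2) unfolding level_def by auto
  ultimately show ?case by blast
qed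

lemma dickson:
  fixes S :: "'v::finite exponent set"
  obtains B where "B \<subseteq> S" "finite B"
    "\<And>a. a \<in> S \<Longrightarrow> \<exists>b\<in>B. \<forall>i. Poly_Mapping.lookup b i \<le> Poly_Mapping.lookup a i"
  using dickson_on[OF finite_UNIV, of S] by auto

text \<open>Exponents of the irreducible monomial ideal generated by the powers \<open>x_i^(c_i + 1)\<close> with \<open>c_i < N\<close>.\<close>

definition irreducible_exps :: "nat \<Rightarrow> ('v \<Rightarrow> nat) \<Rightarrow> 'v exponent set" where
  "irreducible_exps N c = {a. \<exists>i. c i < N \<and> c i < Poly_Mapping.lookup a i}"

lemma upward_closed_irreducible_exps: "upward_closed (irreducible_exps N c)"
  unfolding upward_closed_def irreducible_exps_def by (auto simp: lookup_add)

lemma Inter_irreducible_exps: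
  fixes S :: "'v::finite exponent set"
  assumes S: "upward_closed S"
  obtains N where "\<Inter>(irreducible_exps N ` {c. (\<forall>i. c i \<le> N) \<and> S \<subseteq> irreducible_exps N c}) = S"
proof -
  obtain B where B: "B \<subseteq> S" "finite B"
      "\<And>a. a \<in> S \<Longrightarrow> \<exists>b\<in>B. \<forall>i. Poly_Mapping.lookup b i \<le> Poly_Mapping.lookup a i"
    using dickson[of S] by blast
  define N where "N = Suc (Max (insert 0 ((\<lambda>(b, i). Poly_Mapping.lookup b i) ` (B \<times> UNIV))))"
  have bN: "Poly_Mapping.lookup b i < N" if "b \<in> B" for b i
  proof -
    have "Poly_Mapping.lookup b i \<in> (\<lambda>(b, i). Poly_Mapping.lookup b i) ` (B \<times> UNIV)"
      using that by (auto intro: image_eqI[of _ _ "(b, i)"])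
    then show ?thesis unfolding N_def using B(2) by (simp add: le_imp_less_Suc)
  qed
  let ?C = "{c. (\<forall>i. c i \<le> N) \<and> S \<subseteq> irreducible_exps N c}"
  have "u \<in> S" if u: "u \<in> \<Inter>(irreducible_exps N ` ?C)" for u
  proof (rule ccontr)
    assume "u \<notin> S"
    \<comment> \<open>the irreducible ideal given by the exponents of \<open>u\<close>, capped at \<open>N\<close>, contains \<open>S\<close> but not \<open>u\<close>\<close>
    define c where "c i = min (Poly_Mapping.lookup u i) N" for i
    have "S \<subseteq> irreducible_exps N c"
    proof
      fix a assume "a \<in> S"
      then obtain b where b: "b \<in> B" "\<forall>i. Poly_Mapping.lookup b i \<le> Poly_Mapping.lookup a i"
        using B(3) by blast
      have "\<exists>i. Poly_Mapping.lookup u i < Poly_Mapping.lookup b i"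
      proof (rule ccontr)
        assume "\<not> ?thesis"
        then have "u = b + (u - b)" by (intro exp_eq_plus_diff) (simp add: not_less)
        then show False using \<open>u \<notin> S\<close> upward_closedD[OF S] B(1) b(1) by (metis subsetD)
      qed
      then obtain i where "Poly_Mapping.lookup u i < Poly_Mapping.lookup b i" by auto
      then show "a \<in> irreducible_exps N c"
        using bN[OF b(1), of i] b(2) unfolding irreducible_exps_def c_def
        by (intro CollectI exI[of _ i]) (simp add: order_less_le_trans)
    qed
    then have "c \<in> ?C" unfolding c_def by auto
    moreover have "u \<notin> irreducible_exps N c" unfolding irreducible_exps_def c_def by auto
    ultimately show False using u by blast
  qed
  then have "\<Inter>(irreducible_exps N ` ?C) = S" by blast
  then show ?thesis by (rule that)
qed

lemma primary_Inter_irreducible_exps: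
  fixes C :: "('v::finite \<Rightarrow> nat) set"
  assumes "C \<noteq> {}" and W: "\<And>c. c \<in> C \<Longrightarrow> {i. c i < N} = W"
  shows "primary_ideal (supported_polys (\<Inter>(irreducible_exps N ` C)) :: ('v, 'k::field) mpoly set)"
    and "ideal_radical (supported_polys (\<Inter>(irreducible_exps N ` C)) :: ('v, 'k) mpoly set) = P_ideal (-W)"
proof -
  let ?T = "\<Inter>(irreducible_exps N ` C)"
  have "upward_closed ?T"
    by (rule upward_closed_Inter) (auto intro: upward_closed_irreducible_exps)
  moreover have "saturated_exps (-W) ?T"
    unfolding saturated_exps_def irreducible_exps_def exps_on_def
    using W by (fastforce simp: lookup_add)
  moreover have "0 \<notin> ?T" using assms(1) unfolding irreducible_exps_def by auto
  moreover have "scale_exp N (unit_exp i) \<in> ?T" if "i \<notin> -W" for i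
    using that W unfolding irreducible_exps_def by (auto simp: lookup_unit_exp)
  ultimately show "primary_ideal (supported_polys ?T :: ('v, 'k) mpoly set)"
    and "ideal_radical (supported_polys ?T :: ('v, 'k) mpoly set) = P_ideal (-W)"
    using supported_polys_primary[of ?T "-W"] by blast+
qed

lemma minimal_primary_decomposition_supported_polys:
  fixes S :: "'v::finite exponent set"
  assumes S: "upward_closed S"
  shows "\<exists>Qs. minimal_primary_decomposition (supported_polys S :: ('v, 'k::field) mpoly set) Qs"
proof -
  obtain N where N: "\<Inter>(irreducible_exps N ` {c. (\<forall>i. c i \<le> N) \<and> S \<subseteq> irreducible_exps N c}) = S"
    by (rule Inter_irreducible_exps[OF S])
  \<comment> \<open>group the irreducible components by their radical\<close>
  define C where "C W = {c. (\<forall>i. c i \<le> N) \<and> S \<subseteq> irreducible_exps N c \<and> {i. c i < N} = W}" for W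
  define Q where "Q W = (supported_polys (\<Inter>(irreducible_exps N ` C W)) :: ('v, 'k) mpoly set)" for W
  define Ws where "Ws = {W. C W \<noteq> {}}"
  have primary: "primary_ideal (Q W)" and radical: "ideal_radical (Q W) = P_ideal (-W)"
    if "W \<in> Ws" for W
  proof -
    have "C W \<noteq> {}" "\<And>c. c \<in> C W \<Longrightarrow> {i. c i < N} = W"
      using that unfolding Ws_def C_def by auto
    note primary_Inter_irreducible_exps[OF this, where 'k='k]
    then show "primary_ideal (Q W)" "ideal_radical (Q W) = P_ideal (-W)"
      unfolding Q_def by blast+
  qed
  have "(\<Inter>W\<in>Ws. \<Inter>(irreducible_exps N ` C W))
      = \<Inter>(irreducible_exps N ` {c. (\<forall>i. c i \<le> N) \<and> S \<subseteq> irreducible_exps N c})"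
    unfolding Ws_def C_def by blast
  moreover have "\<Inter>(Q ` Ws) = supported_polys (\<Inter>W\<in>Ws. \<Inter>(irreducible_exps N ` C W))"
    unfolding Q_def by (simp add: supported_polys_Inter)
  ultimately have "\<Inter>(Q ` Ws) = supported_polys S" using N by simp
  moreover have "Q W = Q W'"
    if "W \<in> Ws" "W' \<in> Ws" "ideal_radical (Q W) = ideal_radical (Q W')" for W W'
  proof -
    have "(P_ideal (-W) :: ('v, 'k) mpoly set) = P_ideal (-W')" using that radical by simp
    then have "-W = -W'" by (rule P_ideal_inject)
    then show ?thesis by simp
  qed
  moreover have "finite Ws" by simp
  ultimately show ?thesis
    using minimal_primary_decomposition_exists[of "Q ` Ws" "supported_polys S"] primary by auto
qed

subsection \<open>Symbolic powers of monomial ideals\<close>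

lemma var_power: "(var i ^ k :: ('v, 'k::field) mpoly) = monom (Poly_Mapping.single i k)"
  by (induction k) (simp_all add: var_def monom_zero monom_mult single_add[symmetric])

lemma monom_eq_prod_var:
  "monom a = (\<Prod>i\<in>UNIV. var i ^ Poly_Mapping.lookup a i :: ('v::finite, 'k::field) mpoly)"
proof -
  have monom_sum: "monom (sum g X) = (\<Prod>x\<in>X. monom (g x) :: ('v, 'k) mpoly)" for g :: "'v \<Rightarrow> 'v exponent" and X
    by (induction X rule: infinite_finite_induct) (simp_all add: monom_zero monom_mult[symmetric])
  have "(\<Sum>i\<in>UNIV. Poly_Mapping.single i (Poly_Mapping.lookup a i)) = a"
    by (rule poly_mapping_eqI) (simp add: lookup_sum lookup_single when_def)
  then show ?thesis by (simp add: var_power monom_sum[symmetric])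
qed

lemma minimal_prime_supported_polys:
  fixes S :: "'v::finite exponent set"
  assumes mp: "minimal_prime P (supported_polys S :: ('v, 'k::field) mpoly set)"
  shows "\<exists>G. P = P_ideal G"
proof -
  have P: "prime_ideal P" "supported_polys S \<subseteq> P"
    and minimal: "\<And>P'. prime_ideal P' \<Longrightarrow> supported_polys S \<subseteq> P' \<Longrightarrow> P' \<subseteq> P \<Longrightarrow> P' = P"
    using mp unfolding minimal_prime_def by auto
  define G where "G = {i. var i \<notin> P}"
  \<comment> \<open>\<open>P\<close> contains the monomial prime of the variables it contains, which in turn contains the ideal\<close>
  have "P_ideal G \<subseteq> P"
    unfolding P_ideal_def using P(1) by (intro ideal_gen_least) (auto simp: G_def prime_ideal_def)
  moreover have "supported_polys S \<subseteq> (P_ideal G :: ('v, 'k) mpoly set)"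
    unfolding P_ideal_eq_supported_polys
  proof (rule supported_polys_mono, rule subsetI)
    fix a assume "a \<in> S"
    then have "(monom a :: ('v, 'k) mpoly) \<in> P"
      using P(2) monom_mem_supported_polys_iff by blast
    then have "(\<Prod>i\<in>UNIV. var i ^ Poly_Mapping.lookup a i :: ('v, 'k) mpoly) \<in> P"
      by (simp only: monom_eq_prod_var)
    then obtain i where i: "var i ^ Poly_Mapping.lookup a i \<in> P"
      using prod_not_in_prime[OF P(1) finite_UNIV, of "\<lambda>i. var i ^ Poly_Mapping.lookup a i"] by blast
    then have "Poly_Mapping.lookup a i \<noteq> 0" using one_not_in_prime[OF P(1)] by (metis power_0)
    moreover have "var i \<in> P" by (rule prime_ideal_power_mem[OF P(1) i])
    ultimately show "a \<in> prime_exps G" unfolding prime_exps_def G_def by auto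
  qed
  ultimately have "P_ideal G = P" using minimal[OF prime_ideal_P_ideal] by blast
  then show ?thesis by blast
qed

lemma primary_component_supported_polys:
  fixes S :: "'v::finite exponent set"
  assumes S: "upward_closed S"
    and F: "minimal_prime (P_ideal F) (supported_polys S :: ('v, 'k::field) mpoly set)"
  shows "primary_component (supported_polys S) (P_ideal F)
      = (supported_polys (exp_saturation F S) :: ('v, 'k) mpoly set)"
    and "primary_ideal (supported_polys (exp_saturation F S) :: ('v, 'k) mpoly set)"
    and "ideal_radical (supported_polys (exp_saturation F S) :: ('v, 'k) mpoly set) = P_ideal F"
  using primary_component_eq_saturation[OF F] minimal_primary_decomposition_supported_polys[OF S]
  unfolding saturation_supported_polys[OF S] by blast+

lemma symbolic_power_supported_polys:
  fixes S :: "'v::finite exponent set"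
  assumes S: "upward_closed S" and t: "t \<ge> 1"
  shows "symbolic_power (supported_polys S :: ('v, 'k::field) mpoly set) t
    = (\<Inter>F\<in>calF (supported_polys S :: ('v, 'k) mpoly set).
        supported_polys (exp_saturation F (sumset_power S t)))"
proof -
  let ?I = "supported_polys S :: ('v, 'k) mpoly set"
  have pow: "ideal_pow ?I t = supported_polys (sumset_power S t)" by (rule ideal_pow_supported_polys[OF S])
  have minimal_pow: "minimal_prime P (supported_polys (sumset_power S t) :: ('v, 'k) mpoly set)
      \<longleftrightarrow> minimal_prime P ?I" for P
    using minimal_prime_ideal_pow_iff[OF is_ideal_supported_polys[OF S] t, of P] pow by simp
  have component: "primary_component (ideal_pow ?I t) (P_ideal F)
      = supported_polys (exp_saturation F (sumset_power S t))"
    if "F \<in> calF ?I" for F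
  proof -
    have "minimal_prime (P_ideal F) (supported_polys (sumset_power S t) :: ('v, 'k) mpoly set)"
      using that minimal_pow unfolding calF_def by simp
    then show ?thesis
      using primary_component_supported_polys(1)[OF upward_closed_sumset_power[OF S]] pow by simp
  qed
  have "{primary_component (ideal_pow ?I t) P | P. minimal_prime P ?I}
      = (\<lambda>F. primary_component (ideal_pow ?I t) (P_ideal F)) ` calF ?I"
    using minimal_prime_supported_polys unfolding calF_def by blast
  then show ?thesis unfolding symbolic_power_def by (simp add: component)
qed

section \<open>Ideals defined by a degree bound\<close>

lemma upward_closed_deg_ge: "upward_closed {a. m \<le> deg_on W a}"
  unfolding upward_closed_def by (auto simp: deg_on_add)

lemma sumset_power_deg_ge:
  assumes "S \<subseteq> {a. m \<le> deg_on W a}"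
  shows "sumset_power S t \<subseteq> {a. t * m \<le> deg_on W a}"
proof (induction t)
  case (Suc t)
  show ?case
  proof
    fix x assume "x \<in> sumset_power S (Suc t)"
    then obtain u v where "x = u + v" "u \<in> S" "v \<in> sumset_power S t" by (auto elim: set_plus_elim)
    moreover have "m \<le> deg_on W u" "t * m \<le> deg_on W v" using assms Suc calculation by auto
    ultimately show "x \<in> {a. Suc t * m \<le> deg_on W a}" by (simp add: deg_on_add)
  qed
qed simp

text \<open>If \<open>f\<close> has a term of \<open>W\<close>-degree below \<open>m\<close>, the minimal term \<open>a\<close> of \<open>f\<close> has \<open>W\<close>-degree \<open>e < m\<close>, and
  \<open>M a\<close> is a term of \<open>f^M\<close> that no \<open>c_i f^(M - i)\<close> with \<open>c_i\<close> of \<open>W\<close>-degree at least \<open>i m\<close> can cancel.\<close>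

lemma integrally_closed_deg_ge:
  "integrally_closed (supported_polys {a. m \<le> deg_on W a} :: ('v::finite, 'k::field) mpoly set)"
proof -
  let ?T = "{a. m \<le> deg_on W a}"
  let ?key = "deg_lex_key W"
  have "f \<in> supported_polys ?T" if closure: "f \<in> integral_closure (supported_polys ?T)"
    for f :: "('v, 'k) mpoly"
  proof (rule ccontr)
    obtain M c where M: "M \<ge> 1" and c: "\<forall>i\<in>{1..M}. c i \<in> ideal_pow (supported_polys ?T) i"
      and eq: "f ^ M + (\<Sum>i=1..M. c i * f ^ (M - i)) = 0"
      using closure unfolding integral_closure_def integral_over_ideal_def by blast
    assume f: "f \<notin> supported_polys ?T"
    then have "f \<noteq> 0" using ideal_zero[OF is_ideal_supported_polys[OF upward_closed_deg_ge]] by metis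
    then obtain a where a: "is_min_term ?key f a" by (rule is_min_term_exists)
    define e where "e = deg_on W a"
    obtain b where "b \<in> Poly_Mapping.keys f" "b \<notin> ?T" using f unfolding supported_polys_def by auto
    then have "e < m" using is_min_term_deg_on[OF a, of b] unfolding e_def by simp
    have keys_f: "Poly_Mapping.keys f \<subseteq> {a. e \<le> deg_on W a}"
      using is_min_term_deg_on[OF a] unfolding e_def by auto
    obtain M' where M': "M = Suc M'" using M by (cases M) auto
    have "is_min_term ?key (f ^ M) (scale_exp M a)"
      unfolding M' by (rule is_min_term_power[OF inj_deg_lex_key deg_lex_key_add a])
    then have "Poly_Mapping.lookup (f ^ M) (scale_exp M a) \<noteq> 0"
      unfolding is_min_term_def by (simp add: in_keys_iff)
    moreover have "Poly_Mapping.lookup (c i * f ^ (M - i)) (scale_exp M a) = 0" if i: "i \<in> {1..M}" for i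
    proof -
      have "c i \<in> supported_polys (sumset_power ?T i)"
        using c i ideal_pow_supported_polys[OF upward_closed_deg_ge] by metis
      then have "Poly_Mapping.keys (c i) \<subseteq> {a. i * m \<le> deg_on W a}"
        using sumset_power_deg_ge[of ?T m W i] unfolding supported_polys_def by auto
      then have keys: "Poly_Mapping.keys (c i * f ^ (M - i)) \<subseteq> {a. i * m + (M - i) * e \<le> deg_on W a}"
        using keys_mult_deg_on keys_power_deg_on[OF keys_f] by blast
      have "M * e = (M - i) * e + i * e" using i by (simp add: add_mult_distrib[symmetric])
      moreover have "i * e < i * m" using i \<open>e < m\<close> by simp
      ultimately have "deg_on W (scale_exp M a) < i * m + (M - i) * e"
        by (simp add: deg_on_scale_exp e_def)
      then have "scale_exp M a \<notin> Poly_Mapping.keys (c i * f ^ (M - i))" using keys by auto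
      then show ?thesis by (simp add: in_keys_iff)
    qed
    ultimately have "Poly_Mapping.lookup (f ^ M + (\<Sum>i=1..M. c i * f ^ (M - i))) (scale_exp M a) \<noteq> 0"
      by (simp add: lookup_add lookup_sum)
    then show False using eq by simp
  qed
  then show ?thesis using subset_integral_closure unfolding integrally_closed_def by blast
qed

section \<open>Powers of ideals containing all near-pure powers\<close>

definition near_power_exps :: "'v set \<Rightarrow> nat \<Rightarrow> 'v exponent set" where
  "near_power_exps W D = {scale_exp (D - 1) (unit_exp i) + unit_exp j | i j. i \<in> W \<and> j \<in> W}"

lemma scale_exp_unit_exp_pred: "D \<ge> 1 \<Longrightarrow> scale_exp (D - 1) (unit_exp i) + unit_exp i = scale_exp D (unit_exp i)"
  using scale_exp_Suc[of "D - 1" "unit_exp i"] by (simp add: add.commute)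

lemma pure_power_in_near_power_exps:
  "D \<ge> 1 \<Longrightarrow> i \<in> W \<Longrightarrow> scale_exp D (unit_exp i) \<in> near_power_exps W D"
  unfolding near_power_exps_def by (metis (mono_tags, lifting) mem_Collect_eq scale_exp_unit_exp_pred)

lemma exists_exp_below_with_deg_on:
  fixes a :: "'v::finite exponent"
  assumes "k \<le> deg_on W a"
  shows "\<exists>b. (\<forall>i. Poly_Mapping.lookup b i \<le> Poly_Mapping.lookup a i) \<and> deg_on W b = k"
  using assms
proof (induction k)
  case 0 then show ?case by (intro exI[of _ 0]) simp
next
  case (Suc k)
  then obtain b where b: "\<forall>i. Poly_Mapping.lookup b i \<le> Poly_Mapping.lookup a i" "deg_on W b = k"
    by auto
  have "\<exists>i\<in>W. Poly_Mapping.lookup b i < Poly_Mapping.lookup a i"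
  proof (rule ccontr)
    assume "\<not> ?thesis"
    then have "deg_on W a \<le> deg_on W b" unfolding deg_on_def by (intro sum_mono) (auto simp: not_less)
    then show False using Suc.prems b(2) by simp
  qed
  then obtain i where i: "i \<in> W" "Poly_Mapping.lookup b i < Poly_Mapping.lookup a i" by auto
  have "\<forall>j. Poly_Mapping.lookup (b + unit_exp i) j \<le> Poly_Mapping.lookup a j"
    using b(1) i(2) by (auto simp: lookup_add lookup_unit_exp Suc_le_eq)
  moreover have "deg_on W (b + unit_exp i) = Suc k" using b(2) i(1) by (simp add: deg_on_add deg_on_unit_exp)
  ultimately show ?case by blast
qed

text \<open>The greedy decomposition keeps the invariant that the remainders \<open>b_j mod D\<close>, \<open>j \<noteq> i\<^sub>0\<close>, can
  still be paired with \<open>D - 1\<close> copies of \<open>x_i\<^sub>0\<close> each. A step splits off a pure power \<open>x_j^D\<close> if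
  possible, else a factor \<open>x_i\<^sub>0^(D - 1) x_j\<close>, else a power of \<open>x_i\<^sub>0\<close> alone.\<close>

definition residues_covered :: "'v set \<Rightarrow> nat \<Rightarrow> 'v \<Rightarrow> 'v exponent \<Rightarrow> bool" where
  "residues_covered W D i0 b \<longleftrightarrow>
     (D - 1) * (\<Sum>j\<in>W - {i0}. Poly_Mapping.lookup b j mod D) \<le> Poly_Mapping.lookup b i0"

lemma residues_covered_minus_pure_power:
  assumes j: "j \<in> W - {i0}" "D \<le> Poly_Mapping.lookup b j" and b: "residues_covered W D i0 b"
  shows "residues_covered W D i0 (b - scale_exp D (unit_exp j))"
proof -
  let ?g = "scale_exp D (unit_exp j)"
  have "(\<Sum>k\<in>W - {i0}. Poly_Mapping.lookup (b - ?g) k mod D) = (\<Sum>k\<in>W - {i0}. Poly_Mapping.lookup b k mod D)"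
    using j(2) by (intro sum.cong) (auto simp: lookup_minus lookup_unit_exp le_mod_geq)
  moreover have "Poly_Mapping.lookup (b - ?g) i0 = Poly_Mapping.lookup b i0"
    using j(1) by (auto simp: lookup_minus lookup_unit_exp)
  ultimately show ?thesis using b unfolding residues_covered_def by simp
qed

lemma residues_covered_minus_mixed:
  fixes W :: "'v::finite set"
  assumes j: "j \<in> W - {i0}" "1 \<le> Poly_Mapping.lookup b j" "Poly_Mapping.lookup b j < D"
    and b: "residues_covered W D i0 b"
  shows "D - 1 \<le> Poly_Mapping.lookup b i0"
    and "residues_covered W D i0 (b - (scale_exp (D - 1) (unit_exp i0) + unit_exp j))"
proof -
  define g where "g = scale_exp (D - 1) (unit_exp i0) + unit_exp j"
  have lg: "Poly_Mapping.lookup g k = (if k = i0 then D - 1 else 0) + (if k = j then 1 else 0)" for k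
    unfolding g_def by (simp add: lookup_unit_exp lookup_add)
  have "Poly_Mapping.lookup b j mod D \<le> (\<Sum>k\<in>W - {i0}. Poly_Mapping.lookup b k mod D)"
    by (rule member_le_sum) (use j in auto)
  then have "1 \<le> (\<Sum>k\<in>W - {i0}. Poly_Mapping.lookup b k mod D)" using j(2,3) by simp
  then show "D - 1 \<le> Poly_Mapping.lookup b i0" using b unfolding residues_covered_def
    by (metis dual_order.trans mult.right_neutral mult_le_mono2)
  have "(\<Sum>k\<in>W - {i0} - {j}. Poly_Mapping.lookup (b - g) k mod D)
      = (\<Sum>k\<in>W - {i0} - {j}. Poly_Mapping.lookup b k mod D)"
    by (rule sum.cong) (auto simp: lookup_minus lg)
  moreover have "Poly_Mapping.lookup (b - g) j = Poly_Mapping.lookup b j - 1"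
    using j(1) by (simp add: lookup_minus lg)
  ultimately have "(\<Sum>k\<in>W - {i0}. Poly_Mapping.lookup b k mod D)
      = Suc (\<Sum>k\<in>W - {i0}. Poly_Mapping.lookup (b - g) k mod D)"
    using j by (simp add: sum.remove)
  moreover have "Poly_Mapping.lookup (b - g) i0 = Poly_Mapping.lookup b i0 - (D - 1)"
    using j(1) by (auto simp: lookup_minus lg)
  ultimately show "residues_covered W D i0 (b - g)"
    using b unfolding residues_covered_def by (simp add: algebra_simps)
qed

lemma near_power_step:
  fixes b :: "'v::finite exponent"
  assumes D: "D \<ge> 1" and i0: "i0 \<in> W" and b: "D \<le> deg_on W b" "residues_covered W D i0 b"
  obtains g where "g \<in> near_power_exps W D" "\<forall>i. Poly_Mapping.lookup g i \<le> Poly_Mapping.lookup b i"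
    "residues_covered W D i0 (b - g)"
proof -
  consider (pure) j where "j \<in> W - {i0}" "D \<le> Poly_Mapping.lookup b j"
    | (mixed) j where "j \<in> W - {i0}" "1 \<le> Poly_Mapping.lookup b j" "Poly_Mapping.lookup b j < D"
    | (single) "\<forall>j\<in>W - {i0}. Poly_Mapping.lookup b j = 0"
    by (metis less_one not_le)
  then show ?thesis
  proof cases
    case pure
    then show ?thesis
      using that[of "scale_exp D (unit_exp j)"] residues_covered_minus_pure_power[OF pure b(2)] D
      by (simp add: pure_power_in_near_power_exps lookup_unit_exp)
  next
    case mixed
    have "scale_exp (D - 1) (unit_exp i0) + unit_exp j \<in> near_power_exps W D"
      unfolding near_power_exps_def using mixed(1) i0 by blast
    moreover have "\<forall>i. Poly_Mapping.lookup (scale_exp (D - 1) (unit_exp i0) + unit_exp j) i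
        \<le> Poly_Mapping.lookup b i"
      using residues_covered_minus_mixed(1)[OF mixed b(2)] mixed by (auto simp: lookup_add lookup_unit_exp)
    ultimately show ?thesis using that residues_covered_minus_mixed(2)[OF mixed b(2)] by blast
  next
    case single
    have "deg_on W b = Poly_Mapping.lookup b i0"
      unfolding deg_on_def using i0 single by (simp add: sum.remove)
    then have "\<forall>i. Poly_Mapping.lookup (scale_exp D (unit_exp i0)) i \<le> Poly_Mapping.lookup b i"
      using b(1) by (simp add: lookup_unit_exp)
    moreover have "residues_covered W D i0 (b - scale_exp D (unit_exp i0))"
      using single unfolding residues_covered_def by (simp add: lookup_minus lookup_unit_exp)
    ultimately show ?thesis using that pure_power_in_near_power_exps[OF D i0] by blast
  qed
qed

lemma deg_on_near_power_exps:
  fixes W :: "'v::finite set"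
  assumes "g \<in> near_power_exps W D" and "D \<ge> 1"
  shows "deg_on W g = D"
  using assms unfolding near_power_exps_def by (auto simp: deg_on_add deg_on_scale_exp deg_on_unit_exp)

lemma mem_sumset_power_if_residues_covered:
  fixes b :: "'v::finite exponent"
  assumes X: "near_power_exps W D \<subseteq> X" and D: "D \<ge> 1" and i0: "i0 \<in> W"
  shows "deg_on W b = D * t \<Longrightarrow> residues_covered W D i0 b \<Longrightarrow> b \<in> sumset_power X t"
proof (induction t arbitrary: b)
  case (Suc t)
  obtain g where g: "g \<in> near_power_exps W D" "\<forall>i. Poly_Mapping.lookup g i \<le> Poly_Mapping.lookup b i"
      "residues_covered W D i0 (b - g)"
    using near_power_step[OF D i0 _ Suc.prems(2)] Suc.prems(1) by auto
  have "deg_on W (b - g) = D * t"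
    using deg_on_diff[of g b W] g(2) deg_on_near_power_exps[OF g(1) D] Suc.prems(1) by simp
  then have "b - g \<in> sumset_power X t" using Suc.IH g(3) by blast
  moreover have "b = g + (b - g)" using g(2) by (intro exp_eq_plus_diff) auto
  ultimately show ?case using g(1) X by (metis set_plus_intro subsetD sumset_power.simps(2))
qed simp

text \<open>Choosing \<open>i\<^sub>0\<close> with the largest exponent makes the invariant hold once \<open>t\<close> is large.\<close>

lemma deg_ge_subset_sumset_power:
  fixes W :: "'v::finite set"
  assumes X: "upward_closed X" "near_power_exps W D \<subseteq> X" and D: "D \<ge> 1"
    and t: "card W * card W * D \<le> t" "t \<ge> 1"
  shows "{a. D * t \<le> deg_on W a} \<subseteq> sumset_power X t"
proof
  fix a assume "a \<in> {a. D * t \<le> deg_on W a}"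
  then obtain b where b: "\<forall>i. Poly_Mapping.lookup b i \<le> Poly_Mapping.lookup a i" "deg_on W b = D * t"
    using exists_exp_below_with_deg_on by force
  have "W \<noteq> {}" using b(2) D t(2) by (auto simp: deg_on_def)
  have "Max (Poly_Mapping.lookup b ` W) \<in> Poly_Mapping.lookup b ` W"
    using \<open>W \<noteq> {}\<close> by (intro Max_in) auto
  then obtain i0 where "i0 \<in> W" "Poly_Mapping.lookup b i0 = Max (Poly_Mapping.lookup b ` W)"
    by auto
  then have i0: "i0 \<in> W" "\<forall>j\<in>W. Poly_Mapping.lookup b j \<le> Poly_Mapping.lookup b i0" by simp_all
  define n where "n = card W"
  have "n \<ge> 1" unfolding n_def using \<open>W \<noteq> {}\<close> by (simp add: Suc_le_eq card_gt_0_iff)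
  have "D * t \<le> n * Poly_Mapping.lookup b i0"
    using b(2) sum_mono[of W "Poly_Mapping.lookup b" "\<lambda>_. Poly_Mapping.lookup b i0"] i0(2)
    unfolding deg_on_def n_def by simp
  then have "n * (D * n * D) \<le> n * Poly_Mapping.lookup b i0"
    using t(1) unfolding n_def[symmetric]
    by (metis (no_types, lifting) mult.assoc mult.left_commute mult_le_mono2 order_trans)
  then have big: "D * n * D \<le> Poly_Mapping.lookup b i0" using \<open>n \<ge> 1\<close> by simp
  have "(\<Sum>j\<in>W - {i0}. Poly_Mapping.lookup b j mod D) \<le> (\<Sum>j\<in>W - {i0}. D)"
    by (rule sum_mono) (use D in simp)
  also have "\<dots> \<le> n * D" unfolding n_def by (simp add: card_mono)
  finally have "(D - 1) * (\<Sum>j\<in>W - {i0}. Poly_Mapping.lookup b j mod D) \<le> D * n * D"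
    by (metis (no_types, lifting) diff_le_self mult.assoc mult.commute mult_le_mono)
  then have "residues_covered W D i0 b" using big unfolding residues_covered_def by simp
  then have "b \<in> sumset_power X t"
    by (rule mem_sumset_power_if_residues_covered[OF X(2) D i0(1) b(2)])
  moreover have "a = b + (a - b)" using b(1) by (intro exp_eq_plus_diff) auto
  ultimately show "a \<in> sumset_power X t"
    using upward_closedD[OF upward_closed_sumset_power[OF X(1)]] by metis
qed

section \<open>Equigenerated primary components\<close>

lemma I_comp_supported_polys:
  assumes "upward_closed S" and "F \<in> calF (supported_polys S :: ('v::finite, 'k::field) mpoly set)"
  shows "I_comp (supported_polys S :: ('v, 'k) mpoly set) F = supported_polys (exp_saturation F S)"
  using assms primary_component_supported_polys(1) unfolding I_comp_def calF_def by blast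

lemma zero_not_in_exp_saturation:
  assumes S: "upward_closed S" and "F \<in> calF (supported_polys S :: ('v::finite, 'k::field) mpoly set)"
  shows "0 \<notin> exp_saturation F S"
proof
  assume "0 \<in> exp_saturation F S"
  then have "(monom 0 :: ('v, 'k) mpoly) \<in> supported_polys (exp_saturation F S)"
    by (simp only: monom_mem_supported_polys_iff)
  then have "(1 :: ('v, 'k) mpoly) \<in> supported_polys (exp_saturation F S)" by (simp add: monom_zero)
  then have "supported_polys (exp_saturation F S) = (UNIV :: ('v, 'k) mpoly set)"
    using ideal_mult_right[OF is_ideal_supported_polys[OF upward_closed_exp_saturation[OF S]]]
    by (metis UNIV_eq_I mult_1)
  then show False
    using assms primary_component_supported_polys(2) unfolding calF_def primary_ideal_def by blast
qed

lemma power_in_exp_saturation: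
  assumes S: "upward_closed S" and F: "F \<in> calF (supported_polys S :: ('v::finite, 'k::field) mpoly set)"
    and "k \<notin> F"
  obtains N where "scale_exp N (unit_exp k) \<in> exp_saturation F S"
proof -
  have "var k \<in> (P_ideal F :: ('v, 'k) mpoly set)"
    using \<open>k \<notin> F\<close> unfolding P_ideal_def by (auto intro: subsetD[OF ideal_gen_superset])
  then obtain N where "var k ^ N \<in> (supported_polys (exp_saturation F S) :: ('v, 'k) mpoly set)"
    using primary_component_supported_polys(3)[OF S] F unfolding calF_def ideal_radical_def by blast
  then show ?thesis
    using that by (simp add: var_power scale_exp_unit_exp monom_mem_supported_polys_iff)
qed

lemma var_power_mult_var:
  "var i ^ n * var j = (monom (scale_exp n (unit_exp i) + unit_exp j) :: ('v, 'k::field) mpoly)"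
  unfolding var_power scale_exp_unit_exp by (simp add: var_def unit_exp_def monom_mult)

context
  fixes S :: "'v::finite exponent set" and F :: "'v set" and A :: "'v exponent set" and D :: nat
  assumes S: "upward_closed S" and F: "F \<in> calF (supported_polys S :: ('v, 'k::field) mpoly set)"
    and A: "I_comp (supported_polys S :: ('v, 'k) mpoly set) F = ideal_gen (monom ` A)"
    and A_deg: "\<forall>a\<in>A. monom_deg a = D"
begin

lemma exp_saturation_eq_generators: "exp_saturation F S = A + UNIV"
  using A I_comp_supported_polys[OF S F] unfolding ideal_gen_monom
  by (intro supported_polys_inject[where 'k='k]) simp

lemma generator_exps_on:
  assumes "a \<in> A" shows "a \<in> exps_on (-F)"
proof (rule ccontr)
  assume "a \<notin> exps_on (-F)"
  then obtain k where k: "k \<in> F" "Poly_Mapping.lookup a k \<noteq> 0" unfolding exps_on_def by auto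
  \<comment> \<open>dividing by \<open>x_k\<close>, \<open>k \<in> F\<close>, stays in the component, which has no generator of degree below \<open>D\<close>\<close>
  have a: "a = unit_exp k + (a - unit_exp k)"
    by (rule exp_eq_plus_diff) (use k in \<open>auto simp: lookup_unit_exp\<close>)
  have "unit_exp k \<in> exps_on F" using k(1) unfolding exps_on_def by (auto simp: lookup_unit_exp)
  moreover have "a \<in> exp_saturation F S"
    using assms subset_plus_UNIV exp_saturation_eq_generators by blast
  ultimately have "a - unit_exp k \<in> A + UNIV"
    using saturated_exps_exp_saturation[of F S] a exp_saturation_eq_generators
    unfolding saturated_exps_def by (metis add.commute)
  then obtain g r where "a - unit_exp k = g + r" "g \<in> A" by (auto elim: set_plus_elim)
  then have "monom_deg a = 1 + monom_deg g + monom_deg r"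
    using a unfolding monom_deg_def
    by (metis (no_types) add.assoc deg_on_add deg_on_def deg_on_unit_exp finite_UNIV UNIV_I)
  then show False using A_deg assms \<open>g \<in> A\<close> by simp
qed

lemma deg_on_generator:
  assumes "a \<in> A" shows "deg_on (-F) a = D"
proof -
  have "deg_on F a = 0" using generator_exps_on[OF assms] by (simp add: exps_on_iff_deg_on)
  moreover have "deg_on F a + deg_on (-F) a = monom_deg a"
    unfolding monom_deg_def deg_on_def by (subst sum.union_disjoint[symmetric]) auto
  ultimately show ?thesis using A_deg assms by simp
qed

lemma pure_power_in_component:
  assumes "k \<notin> F" shows "scale_exp D (unit_exp k) \<in> exp_saturation F S" and "D \<ge> 1"
proof -
  obtain N where "scale_exp N (unit_exp k) \<in> A + UNIV"
    using power_in_exp_saturation[OF S F assms] exp_saturation_eq_generators by metis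
  then obtain g r where gr: "scale_exp N (unit_exp k) = g + r" "g \<in> A" by (auto elim: set_plus_elim)
  \<comment> \<open>a generator dividing a power of \<open>x_k\<close> is itself a power of \<open>x_k\<close>, namely \<open>x_k^D\<close>\<close>
  have g0: "Poly_Mapping.lookup g l = 0" if "l \<noteq> k" for l
  proof -
    have "Poly_Mapping.lookup (scale_exp N (unit_exp k)) l = 0" using that by (simp add: lookup_unit_exp)
    then show ?thesis using gr(1) by (metis add_is_0 lookup_add)
  qed
  have "deg_on (-F) g = Poly_Mapping.lookup g k"
    unfolding deg_on_def using assms g0 by (simp add: sum.remove)
  then have "g = scale_exp D (unit_exp k)"
    using deg_on_generator[OF gr(2)] g0 by (intro poly_mapping_eqI) (auto simp: lookup_unit_exp)
  then show "scale_exp D (unit_exp k) \<in> exp_saturation F S"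
    using gr(2) subset_plus_UNIV exp_saturation_eq_generators by blast
  then show "D \<ge> 1"
    using zero_not_in_exp_saturation[OF S F] by (cases D) auto
qed

lemma generators_deg_ge: "A + UNIV \<subseteq> {a. D \<le> deg_on (-F) a}"
  using deg_on_generator by (auto elim!: set_plus_elim simp: deg_on_add)

lemma exp_saturation_sumset_power_eq_deg_ge:
  assumes near: "near_power_exps (-F) D \<subseteq> exp_saturation F S" and "F \<noteq> UNIV"
    and t: "card (-F) * card (-F) * D \<le> t" "t \<ge> 1"
  shows "exp_saturation F (sumset_power S t) = {a. D * t \<le> deg_on (-F) a}"
proof
  show "exp_saturation F (sumset_power S t) \<subseteq> {a. D * t \<le> deg_on (-F) a}"
  proof
    fix a assume "a \<in> exp_saturation F (sumset_power S t)"
    then obtain c where c: "c \<in> exps_on F" "a + c \<in> sumset_power S t"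
      unfolding exp_saturation_def by auto
    have "sumset_power S t \<subseteq> sumset_power (A + UNIV) t"
      using sumset_power_mono[OF subset_exp_saturation] exp_saturation_eq_generators by metis
    also have "\<dots> \<subseteq> {a. t * D \<le> deg_on (-F) a}"
      by (rule sumset_power_deg_ge[OF generators_deg_ge])
    finally have "t * D \<le> deg_on (-F) (a + c)" using c(2) by auto
    then show "a \<in> {a. D * t \<le> deg_on (-F) a}"
      using c(1) by (simp add: deg_on_add exps_on_iff_deg_on mult.commute)
  qed
next
  obtain k where "k \<notin> F" using \<open>F \<noteq> UNIV\<close> by auto
  have "{a. D * t \<le> deg_on (-F) a} \<subseteq> sumset_power (exp_saturation F S) t"
    by (rule deg_ge_subset_sumset_power[OF upward_closed_exp_saturation[OF S] near
          pure_power_in_component(2)[OF \<open>k \<notin> F\<close>] t])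
  also have "\<dots> \<subseteq> exp_saturation F (sumset_power S t)"
    by (rule sumset_power_exp_saturation)
  finally show "{a. D * t \<le> deg_on (-F) a} \<subseteq> exp_saturation F (sumset_power S t)" .
qed

text \<open>If \<open>x_i^(D - 1) x_j\<close> is not a generator, then in a product of \<open>t\<close> generators the variables outside \<open>F\<close>
  cannot form exactly \<open>x_i^(D t - 1) x_j\<close>: a generator using \<open>x_j\<close> would have to be \<open>x_i^(D - 1) x_j\<close>.\<close>

lemma lookup_eq_zero_if_near_power_not_generator:
  assumes u: "scale_exp (D - 1) (unit_exp i) + unit_exp j \<notin> A" and ij: "i \<noteq> j" "i \<notin> F" "j \<notin> F"
  shows "x \<in> sumset_power (A + UNIV) t \<Longrightarrow> deg_on (-F) x = D * t \<Longrightarrow>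
    (\<forall>l. l \<notin> F \<longrightarrow> l \<noteq> i \<longrightarrow> l \<noteq> j \<longrightarrow> Poly_Mapping.lookup x l = 0) \<Longrightarrow>
    Poly_Mapping.lookup x j \<le> 1 \<Longrightarrow> Poly_Mapping.lookup x j = 0"
proof (induction t arbitrary: x)
  case 0
  then have "x \<in> exps_on F" by (simp add: exps_on_iff_deg_on)
  then show ?case using ij(3) unfolding exps_on_def by simp
next
  case (Suc t)
  obtain g r z where x: "x = g + r + z" and g: "g \<in> A" and z: "z \<in> sumset_power (A + UNIV) t"
    using Suc.prems(1) by (auto elim!: set_plus_elim)
  have "t * D \<le> deg_on (-F) z" using z sumset_power_deg_ge[OF generators_deg_ge] by blast
  moreover have "deg_on (-F) x = D + deg_on (-F) r + deg_on (-F) z"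
    using x deg_on_generator[OF g] by (simp add: deg_on_add)
  ultimately have "deg_on (-F) r = 0" and deg_z: "deg_on (-F) z = D * t"
    using Suc.prems(2) by (simp_all add: algebra_simps)
  then have r0: "Poly_Mapping.lookup r l = 0" if "l \<notin> F" for l
    using that unfolding exps_on_iff_deg_on[symmetric] exps_on_def by simp
  have lx: "Poly_Mapping.lookup x l
      = Poly_Mapping.lookup g l + Poly_Mapping.lookup r l + Poly_Mapping.lookup z l" for l
    using x by (simp add: lookup_add)
  have g0: "Poly_Mapping.lookup g l = 0" if "l \<notin> F" "l \<noteq> i" "l \<noteq> j" for l
    using Suc.prems(3) that lx[of l] by simp
  have gj: "Poly_Mapping.lookup g j = 0"
  proof (rule ccontr)
    assume "Poly_Mapping.lookup g j \<noteq> 0"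
    then have gj: "Poly_Mapping.lookup g j = 1" using Suc.prems(4) lx[of j] by simp
    have "deg_on (-F) g = (\<Sum>l\<in>-F. (if l = i then Poly_Mapping.lookup g i else 0)
        + (if l = j then Poly_Mapping.lookup g j else 0))"
      unfolding deg_on_def by (intro sum.cong) (use ij g0 in auto)
    also have "\<dots> = Poly_Mapping.lookup g i + Poly_Mapping.lookup g j"
      using ij by (simp add: sum.distrib)
    finally have "deg_on (-F) g = Poly_Mapping.lookup g i + Poly_Mapping.lookup g j" .
    then have "Poly_Mapping.lookup g i = D - 1" using deg_on_generator[OF g] gj by simp
    then have "g = scale_exp (D - 1) (unit_exp i) + unit_exp j"
      using generator_exps_on[OF g] g0 gj ij
      by (intro poly_mapping_eqI) (auto simp: lookup_add lookup_unit_exp exps_on_def)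
    then show False using u g by simp
  qed
  have "Poly_Mapping.lookup z j = 0"
    using Suc.IH[OF z deg_z] Suc.prems(3,4) lx by simp
  then show ?case using lx[of j] gj r0[OF ij(3)] by simp
qed

lemma near_power_not_in_component_power:
  assumes u: "scale_exp (D - 1) (unit_exp i) + unit_exp j \<notin> exp_saturation F S"
    and ij: "i \<notin> F" "j \<notin> F" and t: "t \<ge> 1" and c: "c \<in> exps_on F"
  shows "scale_exp (D * t - 1) (unit_exp i) + unit_exp j + c \<notin> exp_saturation F (sumset_power S t)"
proof
  define e where "e = scale_exp (D * t - 1) (unit_exp i) + unit_exp j + c"
  assume "e \<in> exp_saturation F (sumset_power S t)"
  then obtain c' where c': "c' \<in> exps_on F" "e + c' \<in> sumset_power S t"
    unfolding exp_saturation_def by auto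
  have D: "D \<ge> 1" by (rule pure_power_in_component(2)[OF ij(1)])
  have "i \<noteq> j"
  proof
    assume "i = j"
    then have "scale_exp (D - 1) (unit_exp i) + unit_exp j = scale_exp D (unit_exp i)"
      using scale_exp_unit_exp_pred[OF D] by simp
    then show False using u pure_power_in_component(1)[OF ij(1)] by simp
  qed
  have "scale_exp (D - 1) (unit_exp i) + unit_exp j \<notin> A"
    using u subset_plus_UNIV exp_saturation_eq_generators by blast
  moreover have "e + c' \<in> sumset_power (A + UNIV) t"
    using c'(2) sumset_power_mono[OF subset_exp_saturation[of S F], of t]
    unfolding exp_saturation_eq_generators by blast
  moreover have "deg_on (-F) (e + c') = D * t"
  proof -
    have "deg_on (-F) c = 0" "deg_on (-F) c' = 0" using c c'(1) by (simp_all add: exps_on_iff_deg_on)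
    then show ?thesis using ij D t unfolding e_def by (simp add: deg_on_add deg_on_scale_exp deg_on_unit_exp)
  qed
  moreover have "\<forall>l. l \<notin> F \<longrightarrow> l \<noteq> i \<longrightarrow> l \<noteq> j \<longrightarrow> Poly_Mapping.lookup (e + c') l = 0"
    using c c'(1) unfolding e_def exps_on_def by (auto simp: lookup_add lookup_unit_exp)
  moreover have "Poly_Mapping.lookup (e + c') j = 1"
    using c c'(1) ij \<open>i \<noteq> j\<close> unfolding e_def exps_on_def by (simp add: lookup_add lookup_unit_exp)
  ultimately show False
    using lookup_eq_zero_if_near_power_not_generator[OF _ \<open>i \<noteq> j\<close> ij, of "e + c'" t] by simp
qed

end

lemma component_of_symbolic_power_eq_deg_ge:
  fixes S :: "'v::finite exponent set"
  assumes S: "upward_closed S" and F: "F \<in> calF (supported_polys S :: ('v, 'k::field) mpoly set)"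
    and A: "I_comp (supported_polys S :: ('v, 'k) mpoly set) F = ideal_gen (monom ` A)"
    and A_deg: "\<forall>a\<in>A. monom_deg a = D"
    and near: "\<forall>i j. i \<notin> F \<and> j \<notin> F \<longrightarrow>
      var i ^ (D - 1) * var j \<in> I_comp (supported_polys S :: ('v, 'k) mpoly set) F"
    and t: "card (-F) * card (-F) * D \<le> t" "t \<ge> 1"
  obtains m where "exp_saturation F (sumset_power S t) = {a. m \<le> deg_on (-F) a}"
proof (cases "F = UNIV")
  case True
  \<comment> \<open>then \<open>P_F = 0\<close>, so the ideal is zero\<close>
  have "supported_polys S \<subseteq> (P_ideal F :: ('v, 'k) mpoly set)"
    using F unfolding calF_def minimal_prime_def by simp
  then have "S \<subseteq> prime_exps F"
    using monom_mem_supported_polys_iff[where 'k='k] unfolding P_ideal_eq_supported_polys by blast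
  then have "S = {}" using True unfolding prime_exps_def by auto
  then have "exp_saturation F (sumset_power S t) = {a. 1 \<le> deg_on (-F) a}"
    using t(2) True by (cases t) (simp_all add: exp_saturation_def deg_on_def)
  then show ?thesis by (rule that)
next
  case False
  have "near_power_exps (-F) D \<subseteq> exp_saturation F S"
    using near I_comp_supported_polys[OF S F]
    by (auto simp: near_power_exps_def var_power_mult_var monom_mem_supported_polys_iff)
  then show ?thesis
    using exp_saturation_sumset_power_eq_deg_ge[OF S F A A_deg _ False t] that by blast
qed

section \<open>The criterion\<close>

lemma finite_calF: "finite (calF (I :: ('v::finite, 'k::field) mpoly set))"
  by (rule finite_subset[of _ UNIV]) simp_all

lemma scale_exp_mem_sumset_power: "x \<in> X \<Longrightarrow> scale_exp t x \<in> sumset_power X t"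
  by (induction t) (auto simp: scale_exp_Suc intro: set_plus_intro)

lemma monom_mem_symbolic_power_iff:
  fixes S :: "'v::finite exponent set"
  assumes "upward_closed S" and "t \<ge> 1"
  shows "(monom e :: ('v, 'k::field) mpoly) \<in> symbolic_power (supported_polys S) t
    \<longleftrightarrow> (\<forall>G\<in>calF (supported_polys S :: ('v, 'k) mpoly set). e \<in> exp_saturation G (sumset_power S t))"
  by (simp add: symbolic_power_supported_polys[OF assms] monom_mem_supported_polys_iff)

lemma monom_mem_integral_closure:
  assumes "D \<ge> 1" and "monom e1 \<in> J" "monom e2 \<in> J"
    and "scale_exp D e = scale_exp (D - 1) e1 + e2"
  shows "(monom e :: ('v, 'k::field) mpoly) \<in> integral_closure J"
proof (rule integral_closure_of_power[OF assms(1)])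
  have monom_power: "monom a ^ k = (monom (scale_exp k a) :: ('v, 'k) mpoly)" for a k
    by (induction k) (simp_all add: monom_zero scale_exp_Suc monom_mult)
  have "monom e1 ^ (D - 1) \<in> ideal_pow J (D - 1)" by (rule power_mem_ideal_pow[OF assms(2)])
  then have "monom e2 * monom e1 ^ (D - 1) \<in> ideal_pow J (Suc (D - 1))"
    using assms(3) by (simp add: mult_mem_ideal_prod)
  then show "monom e ^ D \<in> ideal_pow J D"
    using assms(1,4) by (simp add: monom_power monom_mult add.commute)
qed

text \<open>Multiply, over the finitely many other minimal primes \<open>P_G\<close>, a power of some \<open>x_k\<close>, \<open>k \<in> F - G\<close>,
  lying in \<open>I_G\<close>.\<close>

lemma exists_exps_on_in_other_components:
  fixes S :: "'v::finite exponent set"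
  assumes S: "upward_closed S" and F: "F \<in> calF (supported_polys S :: ('v, 'k::field) mpoly set)"
  obtains \<omega> where "\<omega> \<in> exps_on F"
    "\<forall>G\<in>calF (supported_polys S :: ('v, 'k) mpoly set) - {F}. \<omega> \<in> exp_saturation G S"
proof -
  let ?calF = "calF (supported_polys S :: ('v, 'k) mpoly set)"
  have "\<exists>w. w \<in> exps_on F \<and> w \<in> exp_saturation G S" if G: "G \<in> ?calF - {F}" for G
  proof -
    have "\<not> F \<subseteq> G"
    proof
      assume "F \<subseteq> G"
      then have "(P_ideal G :: ('v, 'k) mpoly set) \<subseteq> P_ideal F" by (rule P_ideal_antimono)
      moreover have "prime_ideal (P_ideal G :: ('v, 'k) mpoly set)"
        "supported_polys S \<subseteq> (P_ideal G :: ('v, 'k) mpoly set)"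
        using G unfolding calF_def minimal_prime_def by auto
      moreover have "\<And>P :: ('v, 'k) mpoly set. prime_ideal P \<Longrightarrow> supported_polys S \<subseteq> P
          \<Longrightarrow> P \<subseteq> P_ideal F \<Longrightarrow> P = P_ideal F"
        using F unfolding calF_def minimal_prime_def by blast
      ultimately have "(P_ideal G :: ('v, 'k) mpoly set) = P_ideal F" by blast
      then show False using G P_ideal_inject by blast
    qed
    then obtain k where k: "k \<in> F" "k \<notin> G" by auto
    obtain N where "scale_exp N (unit_exp k) \<in> exp_saturation G S"
      using power_in_exp_saturation[OF S _ k(2)] G by blast
    moreover have "scale_exp N (unit_exp k) \<in> exps_on F"
      using k(1) unfolding exps_on_def by (auto simp: lookup_unit_exp)
    ultimately show ?thesis by blast
  qed
  then obtain w where w: "\<And>G. G \<in> ?calF - {F} \<Longrightarrow> w G \<in> exps_on F \<and> w G \<in> exp_saturation G S"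
    by metis
  define \<omega> where "\<omega> = sum w (?calF - {F})"
  show ?thesis
  proof (rule that)
    show "\<omega> \<in> exps_on F" unfolding \<omega>_def using w by (intro exps_on_sum) blast
    show "\<forall>G\<in>?calF - {F}. \<omega> \<in> exp_saturation G S"
    proof
      fix G assume "G \<in> ?calF - {F}"
      then have "G \<in> ?calF" "G \<noteq> F" by auto
      then have "\<omega> = w G + sum w (?calF - {F} - {G})"
        unfolding \<omega>_def using finite_calF by (simp add: sum.remove)
      moreover have "w G \<in> exp_saturation G S" using w \<open>G \<in> ?calF\<close> \<open>G \<noteq> F\<close> by blast
      ultimately show "\<omega> \<in> exp_saturation G S"
        using upward_closedD[OF upward_closed_exp_saturation[OF S]] by metis
    qed
  qed
qed

lemma integrally_closed_symbolic_power_if_near_powers: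
  fixes S :: "'v::finite exponent set" and I :: "('v, 'k::field) mpoly set" and d :: "'v set \<Rightarrow> nat"
  assumes S: "upward_closed S" and I: "I = supported_polys S"
    and gen: "\<forall>F\<in>calF I. \<exists>A. (\<forall>a\<in>A. monom_deg a = d F) \<and> I_comp I F = ideal_gen (monom ` A)"
    and near: "\<forall>F\<in>calF I. \<forall>i j. i \<notin> F \<and> j \<notin> F \<longrightarrow> var i ^ (d F - 1) * var j \<in> I_comp I F"
    and t: "t \<ge> 1" "\<forall>F\<in>calF I. card (-F) * card (-F) * d F \<le> t"
  shows "integrally_closed (symbolic_power I t)"
  unfolding I symbolic_power_supported_polys[OF S t(1)]
proof (rule integrally_closed_Inter, clarify)
  fix F assume F: "F \<in> calF (supported_polys S :: ('v, 'k) mpoly set)"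
  obtain A where A: "I_comp (supported_polys S :: ('v, 'k) mpoly set) F = ideal_gen (monom ` A)"
      "\<forall>a\<in>A. monom_deg a = d F"
    using gen F unfolding I by blast
  moreover have "\<forall>i j. i \<notin> F \<and> j \<notin> F \<longrightarrow>
      var i ^ (d F - 1) * var j \<in> I_comp (supported_polys S :: ('v, 'k) mpoly set) F"
    using near F unfolding I by blast
  moreover have "card (-F) * card (-F) * d F \<le> t" using t(2) F unfolding I by blast
  ultimately obtain m where "exp_saturation F (sumset_power S t) = {a. m \<le> deg_on (-F) a}"
    using component_of_symbolic_power_eq_deg_ge[OF S F _ _ _ _ t(1)] by blast
  then show "integrally_closed
      (supported_polys (exp_saturation F (sumset_power S t)) :: ('v, 'k) mpoly set)"
    by (simp add: integrally_closed_deg_ge)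
qed

lemma monom_mem_symbolic_power_if_other_components:
  fixes S :: "'v::finite exponent set"
  assumes S: "upward_closed S" and t: "t \<ge> 1"
    and F: "F \<in> calF (supported_polys S :: ('v, 'k::field) mpoly set)"
    and \<omega>: "\<forall>G\<in>calF (supported_polys S :: ('v, 'k) mpoly set) - {F}. \<omega> \<in> exp_saturation G S"
    and p: "p \<in> sumset_power (exp_saturation F S) t"
  shows "(monom (p + scale_exp t \<omega>) :: ('v, 'k) mpoly) \<in> symbolic_power (supported_polys S) t"
  unfolding monom_mem_symbolic_power_iff[OF S t]
proof
  fix G assume G: "G \<in> calF (supported_polys S :: ('v, 'k) mpoly set)"
  have in_power: "x + y \<in> exp_saturation G (sumset_power S t)"
    if "x \<in> sumset_power (exp_saturation G S) t" for x y
    using that sumset_power_exp_saturation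
      upward_closedD[OF upward_closed_exp_saturation[OF upward_closed_sumset_power[OF S]]] by blast
  show "p + scale_exp t \<omega> \<in> exp_saturation G (sumset_power S t)"
  proof (cases "G = F")
    case True
    then show ?thesis using in_power p by blast
  next
    case False
    then show ?thesis
      using G \<omega> in_power[OF scale_exp_mem_sumset_power] by (simp add: add.commute)
  qed
qed

lemma near_power_exp_identity:
  assumes "D \<ge> 1" and "t \<ge> 1"
  shows "scale_exp D (scale_exp (D * t - 1) (unit_exp i) + unit_exp j + c)
    = scale_exp (D - 1) (scale_exp (D * t) (unit_exp i) + c)
      + (scale_exp (D * t - D) (unit_exp i) + scale_exp D (unit_exp j) + c)"
proof (rule poly_mapping_eqI)
  fix l
  obtain D' t' where "D = Suc D'" "t = Suc t'" using assms by (cases D; cases t) auto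
  then show "Poly_Mapping.lookup (scale_exp D (scale_exp (D * t - 1) (unit_exp i) + unit_exp j + c)) l
    = Poly_Mapping.lookup (scale_exp (D - 1) (scale_exp (D * t) (unit_exp i) + c)
      + (scale_exp (D * t - D) (unit_exp i) + scale_exp D (unit_exp j) + c)) l"
    by (cases "l = i"; cases "l = j") (auto simp: lookup_add lookup_unit_exp algebra_simps)
qed

text \<open>If \<open>x_i^(D - 1) x_j\<close> is missing from \<open>I_F\<close>, take \<open>\<omega>\<close> supported in \<open>F\<close> and lying in all other
  components, and \<open>f = x_i^(D t - 1) x_j \<omega>^t\<close>. Then \<open>f^D = g\<^sub>1^(D - 1) g\<^sub>2\<close> with
  \<open>g\<^sub>1 = x_i^(D t) \<omega>^t\<close> and \<open>g\<^sub>2 = x_i^(D t - D) x_j^D \<omega>^t\<close> in \<open>I^(t)\<close>, so \<open>f\<close> is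
  integral over \<open>I^(t)\<close>, but \<open>f \<notin> I^(t)\<close>.\<close>

lemma near_powers_if_integrally_closed_symbolic_power:
  fixes S :: "'v::finite exponent set" and I :: "('v, 'k::field) mpoly set" and d :: "'v set \<Rightarrow> nat"
  assumes S: "upward_closed S" and I: "I = supported_polys S"
    and gen: "\<forall>F\<in>calF I. \<exists>A. (\<forall>a\<in>A. monom_deg a = d F) \<and> I_comp I F = ideal_gen (monom ` A)"
    and closed: "integrally_closed (symbolic_power I t)" and t: "t \<ge> 1"
    and F: "F \<in> calF I" and ij: "i \<notin> F" "j \<notin> F"
  shows "var i ^ (d F - 1) * var j \<in> I_comp I F"
proof -
  define D where "D = d F"
  obtain A where A: "\<forall>a\<in>A. monom_deg a = D" "I_comp I F = ideal_gen (monom ` A)"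
    using gen F unfolding D_def by blast
  note pure_power = pure_power_in_component[OF S F[unfolded I] A(2)[unfolded I] A(1)]
  have D: "D \<ge> 1" by (rule pure_power(2)[OF ij(1)])
  have "scale_exp (D - 1) (unit_exp i) + unit_exp j \<in> exp_saturation F S"
  proof (rule ccontr)
    assume u: "scale_exp (D - 1) (unit_exp i) + unit_exp j \<notin> exp_saturation F S"
    obtain \<omega> where \<omega>: "\<omega> \<in> exps_on F"
      "\<forall>G\<in>calF (supported_polys S :: ('v, 'k) mpoly set) - {F}. \<omega> \<in> exp_saturation G S"
      by (rule exists_exps_on_in_other_components[OF S F[unfolded I]])
    note witness = monom_mem_symbolic_power_if_other_components[OF S t F[unfolded I] \<omega>(2)]
    define e1 where "e1 = scale_exp (D * t) (unit_exp i) + scale_exp t \<omega>"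
    define e2 where "e2 = scale_exp (D * t - D) (unit_exp i) + scale_exp D (unit_exp j) + scale_exp t \<omega>"
    define e where "e = scale_exp (D * t - 1) (unit_exp i) + unit_exp j + scale_exp t \<omega>"
    obtain t' where t': "t = Suc t'" using t by (cases t) auto
    have "(monom e1 :: ('v, 'k) mpoly) \<in> symbolic_power I t"
      unfolding e1_def I scale_exp_mult
      by (rule witness[OF scale_exp_mem_sumset_power[OF pure_power(1)[OF ij(1)]]])
    moreover have "(monom e2 :: ('v, 'k) mpoly) \<in> symbolic_power I t"
    proof -
      let ?p = "scale_exp D (unit_exp j) + scale_exp t' (scale_exp D (unit_exp i))"
      have "?p \<in> sumset_power (exp_saturation F S) t"
        unfolding t' using pure_power(1)[OF ij(2)] scale_exp_mem_sumset_power[OF pure_power(1)[OF ij(1)]]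
        by (auto intro: set_plus_intro)
      moreover have "e2 = ?p + scale_exp t \<omega>"
        unfolding e2_def t' by (simp add: scale_exp_mult[symmetric] ac_simps)
      ultimately show ?thesis unfolding I using witness by simp
    qed
    moreover have "scale_exp D e = scale_exp (D - 1) e1 + e2"
      unfolding e_def e1_def e2_def by (rule near_power_exp_identity[OF D t])
    ultimately have "(monom e :: ('v, 'k) mpoly) \<in> integral_closure (symbolic_power I t)"
      by (rule monom_mem_integral_closure[OF D])
    then have "e \<in> exp_saturation F (sumset_power S t)"
      using closed F monom_mem_symbolic_power_iff[OF S t] I unfolding integrally_closed_def by auto
    then show False
      using near_power_not_in_component_power[OF S F[unfolded I] A(2)[unfolded I] A(1) u ij t]
        exps_on_scale_exp[OF \<omega>(1)] unfolding e_def by blast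
  qed
  then show ?thesis
    using I_comp_supported_polys[OF S F[unfolded I]] I
    by (simp add: D_def var_power_mult_var monom_mem_supported_polys_iff)
qed

theorem proposition3p6:
  fixes I :: "('v::finite, 'k::field) mpoly set"
    and d :: "'v set \<Rightarrow> nat"
  assumes "monomial_ideal I"
    and "\<forall>F\<in>calF I. \<exists>A. (\<forall>a\<in>A. monom_deg a = d F) \<and> I_comp I F = ideal_gen (monom ` A)"
  shows "(\<exists>t0. \<forall>t\<ge>t0. integrally_closed (symbolic_power I t)) \<longleftrightarrow>
         (\<forall>F\<in>calF I. \<forall>i j. i \<notin> F \<and> j \<notin> F \<longrightarrow> var i ^ (d F - 1) * var j \<in> I_comp I F)"
proof -
  obtain S where S: "upward_closed S" "I = supported_polys S"
    using assms(1) by (rule monomial_idealE)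
  show ?thesis
  proof
    assume "\<exists>t0. \<forall>t\<ge>t0. integrally_closed (symbolic_power I t)"
    then obtain t where "integrally_closed (symbolic_power I t)" "t \<ge> 1"
      by (metis max.cobounded1 max.cobounded2)
    then show "\<forall>F\<in>calF I. \<forall>i j. i \<notin> F \<and> j \<notin> F \<longrightarrow> var i ^ (d F - 1) * var j \<in> I_comp I F"
      using near_powers_if_integrally_closed_symbolic_power[OF S assms(2)] by blast
  next
    assume near: "\<forall>F\<in>calF I. \<forall>i j. i \<notin> F \<and> j \<notin> F \<longrightarrow> var i ^ (d F - 1) * var j \<in> I_comp I F"
    define t0 where "t0 = Suc (\<Sum>F\<in>calF I. card (-F) * card (-F) * d F)"
    have bound: "card (-F) * card (-F) * d F \<le> t0" if "F \<in> calF I" for F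
      unfolding t0_def using that finite_calF by (intro le_SucI member_le_sum) auto
    have "integrally_closed (symbolic_power I t)" if "t \<ge> t0" for t
    proof (rule integrally_closed_symbolic_power_if_near_powers[OF S assms(2) near])
      show "t \<ge> 1" using that unfolding t0_def by simp
      show "\<forall>F\<in>calF I. card (-F) * card (-F) * d F \<le> t" using bound that by (auto intro: order_trans)
    qed
    then show "\<exists>t0. \<forall>t\<ge>t0. integrally_closed (symbolic_power I t)" by blast
  qed
qed

end
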